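(* Let $\sigma>0$, $r,q\in\mathbb{R}$, $T>0$, $\beta\in\mathbb{R}$, $i\in\mathbb{R}$, $L>0$, $K\ge 0$, $\tau_1,\tau_2\in\mathbb{R}$ and $\tau_3>0$. Consider the terminal value problem \[ \frac{\partial V}{\partial t}+\frac12\sigma^2X^2\frac{\partial^2V}{\partial X^2}+(r-q)X\frac{\partial V}{\partial X}-rV=0,\quad 0<t<T,\ X>0, \] \[ V(X,T)=X^{\beta}\,N\!\left[\delta\!\left(\tfrac{X^{i}}{L},\tau_1,\tau_2,\tau_3\right)\right]\cdot 1\{X>K\}. \] Its solution has the representation \[ V(X,\tau;\tau_1,\tau_2,\tau_3,i,L,K)=X^{\beta}e^{\mu(\beta)\tau}N_2(a_1,a_2;\rho), \] where $\tau=T-t$, \[ \mu(\beta)=-r+\beta\Big[r-q-\frac{\sigma^2}{2}(1-\beta)\Big],\qquad \rho=i\sqrt{\frac{\tau}{\tau_3+i^2\tau}}, \] \[ a_2=\Big[\ln\frac{X}{K}+\Big(r-q-\frac{\sigma^2}{2}\Big)\tau+\sigma^2\beta\tau\Big](\sigma\sqrt{\tau})^{-1}=\delta(X/K,\tau,\beta\tau,\tau), \] \[ a_1=\Big[\ln\frac{X^{i}}{L}+\Big(r-q-\frac{\sigma^2}{2}\Big)(\tau_1+i\tau)+\sigma^2(\tau_2+i\beta\tau)\Big]\big(\sigma\sqrt{\tau_3+i^2\tau}\big)^{-1}=\delta\big(X^{i}/L,\ \tau_1+i\tau,\ \tau_2+i\beta\tau,\ \tau_3+i^2\tau\big). \]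
   Context: $N(x)=\frac{1}{\sqrt{2\pi}}\int_{-\infty}^{x}e^{-t^2/2}\,dt$ is the standard normal distribution function, and \[ N_2(a_1,a_2;\rho)=\frac{1}{2\pi\sqrt{1-\rho^2}}\int_{-\infty}^{a_1}\int_{-\infty}^{a_2}\exp\!\Big(-\frac{y_1^2-2\rho y_1y_2+y_2^2}{2(1-\rho^2)}\Big)\,dy_2\,dy_1 \] is the bivariate standard normal distribution function with correlation $\rho$. For $y>0$ and real $\tau_1,\tau_2$, $\tau_3>0$, the notation $\delta$ means \[ \delta(y,\tau_1,\tau_2,\tau_3)=\Big[\ln y+\Big(r-q-\frac{\sigma^2}{2}\Big)\tau_1+\sigma^2\tau_2\Big](\sigma\sqrt{\tau_3})^{-1}. \] $1\{\cdot\}$ denotes the indicator function. *)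

theory Defs
  imports "HOL-Analysis.Analysis"
begin

definition Ncdf :: "real \<Rightarrow> real" where
  "Ncdf x = integral {..x} (\<lambda>t. exp (- t\<^sup>2 / 2) / sqrt (2 * pi))"

definition N2 :: "real \<Rightarrow> real \<Rightarrow> real \<Rightarrow> real" where
  "N2 a1 a2 \<rho> = integral ({..a1} \<times> {..a2})
     (\<lambda>(y1, y2). exp (- (y1\<^sup>2 - 2 * \<rho> * y1 * y2 + y2\<^sup>2) / (2 * (1 - \<rho>\<^sup>2)))
                  / (2 * pi * sqrt (1 - \<rho>\<^sup>2)))"

definition delta :: "real \<Rightarrow> real \<Rightarrow> real \<Rightarrow> real \<Rightarrow> real \<Rightarrow> real \<Rightarrow> real \<Rightarrow> real" where
  "delta r q \<sigma> y \<tau>1 \<tau>2 \<tau>3 =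
     (ln y + (r - q - \<sigma>\<^sup>2 / 2) * \<tau>1 + \<sigma>\<^sup>2 * \<tau>2) / (\<sigma> * sqrt \<tau>3)"

definition mu :: "real \<Rightarrow> real \<Rightarrow> real \<Rightarrow> real \<Rightarrow> real" where
  "mu r q \<sigma> \<beta> = - r + \<beta> * (r - q - \<sigma>\<^sup>2 / 2 * (1 - \<beta>))"

text \<open>The claimed solution, as a function of X and time-to-maturity tau.
  For K = 0 the indicator is identically 1 and a2 = +infinity, so
  N2(a1, +infinity; rho) = N(a1) (convention made explicit).\<close>
definition Vsol :: "real \<Rightarrow> real \<Rightarrow> real \<Rightarrow> real \<Rightarrow> real \<Rightarrow> real \<Rightarrow> real \<Rightarrow> real \<Rightarrow> real \<Rightarrow> real
                    \<Rightarrow> real \<Rightarrow> real \<Rightarrow> real" where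
  "Vsol r q \<sigma> \<beta> i L K \<tau>1 \<tau>2 \<tau>3 X \<tau> =
     (let \<rho> = i * sqrt (\<tau> / (\<tau>3 + i\<^sup>2 * \<tau>));
          a1 = delta r q \<sigma> (X powr i / L) (\<tau>1 + i * \<tau>) (\<tau>2 + i * \<beta> * \<tau>) (\<tau>3 + i\<^sup>2 * \<tau>);
          a2 = delta r q \<sigma> (X / K) \<tau> (\<beta> * \<tau>) \<tau>
      in X powr \<beta> * exp (mu r q \<sigma> \<beta> * \<tau>) * (if K = 0 then Ncdf a1 else N2 a1 a2 \<rho>))"

definition payoff :: "real \<Rightarrow> real \<Rightarrow> real \<Rightarrow> real \<Rightarrow> real \<Rightarrow> real \<Rightarrow> real \<Rightarrow> real \<Rightarrow> real \<Rightarrow> real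
                    \<Rightarrow> real \<Rightarrow> real" where
  "payoff r q \<sigma> \<beta> i L K \<tau>1 \<tau>2 \<tau>3 X =
     X powr \<beta> * Ncdf (delta r q \<sigma> (X powr i / L) \<tau>1 \<tau>2 \<tau>3) * (if X > K then 1 else 0)"

end

theory Submission
  imports Defs "HOL-Probability.Probability"
begin

(* In the variables x = ln X and tau = T - t, the substitution V = X^beta e^(mu(beta) tau) Z(x, tau)
   turns the Black-Scholes equation into the heat equation with drift
   Z_tau = sigma^2/2 Z_xx + m Z_x, where m = r - q - sigma^2/2 + sigma^2 beta.
   Conditioning on the second coordinate gives
   N2(a1, a2; rho) = int_{-oo}^{a2} phi(y) N((a1 - rho y) / sqrt(1 - rho^2)) dy,
   so for K > 0 the claimed solution is Z = int_{-oo}^b phi(y) N(a - k y) dy with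
   b = (x - ln K + m tau) / (sigma sqrt tau), a = (i (x + m tau) + a0) / (sigma sqrt tau3) and
   k = i sqrt tau / sqrt tau3.  Here a - k b does not depend on (x, tau), and after differentiating
   under the integral sign the heat equation reduces to the integration by parts identity
   int_{-oo}^b y phi(y) phi(a - k y) dy = - phi(b) phi(a - k b) - k int_{-oo}^b phi(y) phi'(a - k y) dy.
   As tau -> 0+, k -> 0 while b -> +oo or -oo according to the sign of X - K, which yields the
   terminal value.  For K = 0 the solution is N of an affine function of x divided by
   sigma sqrt(tau3 + i^2 tau), and the heat equation is checked directly. *)

notation std_normal_density ("\<phi>")

section \<open>Derivatives of parametric integrals over half-lines\<close>

lemma has_real_derivative_of_remainder_bound:
  fixes F e :: "real \<Rightarrow> real"
  assumes "(e \<longlongrightarrow> 0) (at p0)"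
    and "\<forall>\<^sub>F p in at p0. \<bar>F p - F p0 - (p - p0) * D\<bar> \<le> \<bar>p - p0\<bar> * e p"
  shows "(F has_real_derivative D) (at p0)"
proof -
  have "\<forall>\<^sub>F p in at p0. p \<noteq> p0" by (simp add: eventually_at_filter)
  with assms(2) have "\<forall>\<^sub>F p in at p0. norm ((F p - F p0) / (p - p0) - D) \<le> e p"
  proof eventually_elim
    case (elim p)
    then have "norm ((F p - F p0) / (p - p0) - D) = \<bar>F p - F p0 - (p - p0) * D\<bar> / \<bar>p - p0\<bar>"
      by (simp add: field_simps flip: abs_divide)
    also have "\<dots> \<le> e p" using elim by (simp add: divide_le_eq mult.commute)
    finally show ?case .
  qed
  from Lim_null_comparison[OF this assms(1)] show ?thesis
    by (simp add: has_field_derivative_iff LIM_zero_cancel)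
qed

lemma second_order_remainder_bound:
  fixes h h' h'' :: "real \<Rightarrow> real"
  assumes d1: "\<And>q. \<bar>q - p0\<bar> < d \<Longrightarrow> (h has_real_derivative h' q) (at q)"
    and d2: "\<And>q. \<bar>q - p0\<bar> < d \<Longrightarrow> (h' has_real_derivative h'' q) (at q)"
    and bound: "\<And>q. \<bar>q - p0\<bar> < d \<Longrightarrow> \<bar>h'' q\<bar> \<le> G"
    and p: "\<bar>p - p0\<bar> < d"
  shows "\<bar>h p - h p0 - (p - p0) * h' p0\<bar> \<le> G * (p - p0)\<^sup>2"
proof -
  let ?S = "closed_segment p0 p"
  have near: "\<bar>q - p0\<bar> \<le> \<bar>p - p0\<bar>" "\<bar>q - p0\<bar> < d" if "q \<in> ?S" for q
    using segment_bound1[OF that] p by auto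
  have G: "0 \<le> G" using bound[of p0] p by fastforce
  have deriv_lip: "\<bar>h' q - h' p0\<bar> \<le> G * \<bar>q - p0\<bar>" if "q \<in> ?S" for q
  proof -
    have "norm (h' q - h' p0) \<le> G * norm (q - p0)"
    proof (rule field_differentiable_bound[OF convex_closed_segment])
      fix z assume "z \<in> ?S"
      then show "(h' has_field_derivative h'' z) (at z within ?S)" "norm (h'' z) \<le> G"
        using has_field_derivative_at_within[OF d2] bound near(2) by auto
    qed (use that in auto)
    then show ?thesis by simp
  qed
  let ?e = "\<lambda>q. h q - h p0 - (q - p0) * h' p0"
  have "norm (?e p - ?e p0) \<le> (G * \<bar>p - p0\<bar>) * norm (p - p0)"
  proof (rule field_differentiable_bound[OF convex_closed_segment])
    fix z assume z: "z \<in> ?S"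
    show "(?e has_field_derivative h' z - h' p0) (at z within ?S)"
      using has_field_derivative_at_within[OF d1[OF near(2)[OF z]]]
      by (auto intro!: derivative_eq_intros)
    have "\<bar>h' z - h' p0\<bar> \<le> G * \<bar>p - p0\<bar>"
      using deriv_lip[OF z] mult_left_mono[OF near(1)[OF z] G] by linarith
    then show "norm (h' z - h' p0) \<le> G * \<bar>p - p0\<bar>" by simp
  qed auto
  then show ?thesis by (simp add: power2_eq_square abs_mult_self_eq mult.assoc)
qed

lemma integral_atMost_split:
  fixes g :: "real \<Rightarrow> real"
  assumes "continuous_on UNIV g" "g integrable_on {..u}" "u \<le> v"
  shows "integral {..v} g = integral {..u} g + integral {u..v} g"
proof -
  have "{..v} = {..u} \<union> {u..v}" using assms(3) by auto
  moreover have "negligible ({..u} \<inter> {u..v})"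
    using assms(3) by (intro negligible_subset[OF negligible_sing[of u]]) auto
  moreover have "g integrable_on {u..v}"
    by (intro integrable_continuous_real continuous_on_subset[OF assms(1)]) auto
  ultimately show ?thesis using assms(2) by simp
qed

lemma has_real_derivative_integral_atMost:
  fixes g :: "real \<Rightarrow> real"
  assumes cont: "continuous_on UNIV g" and int: "\<And>u. g integrable_on {..u}"
  shows "((\<lambda>u. integral {..u} g) has_real_derivative g x) (at x)"
proof -
  have "((\<lambda>u. integral {x - 1..u} g) has_real_derivative g x) (at x within {x - 1..x + 1})"
    by (intro integral_has_real_derivative continuous_on_subset[OF cont]) auto
  then have "((\<lambda>u. integral {..x - 1} g + integral {x - 1..u} g) has_real_derivative g x) (at x)"
    by (auto simp: at_within_Icc_at intro!: derivative_eq_intros)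
  then show ?thesis
  proof (rule has_field_derivative_transform_within_open[where S = "{x - 1<..}"])
    fix u :: real assume "u \<in> {x - 1<..}"
    then show "integral {..x - 1} g + integral {x - 1..u} g = integral {..u} g"
      using integral_atMost_split[OF cont int, of "x - 1" u] by simp
  qed auto
qed

lemma abs_integral_atMost_diff_le:
  fixes g :: "real \<Rightarrow> real"
  assumes "continuous_on UNIV g" "\<And>u. g integrable_on {..u}" "\<And>y. \<bar>g y\<bar> \<le> M"
  shows "\<bar>integral {..u} g - integral {..v} g\<bar> \<le> M * \<bar>u - v\<bar>"
  using field_differentiable_bound[of UNIV "\<lambda>u. integral {..u} g" g M u v]
    has_real_derivative_integral_atMost[OF assms(1,2)] assms(3)
  by auto

lemma has_real_derivative_integral_parametric:
  fixes f f' f'' :: "real \<Rightarrow> real \<Rightarrow> real" and g :: "real \<Rightarrow> real"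
  assumes "d > 0"
    and int: "\<And>p. \<bar>p - p0\<bar> < d \<Longrightarrow> f p integrable_on S"
    and int1: "f' p0 integrable_on S"
    and intg: "g integrable_on S"
    and d1: "\<And>p y. \<bar>p - p0\<bar> < d \<Longrightarrow> y \<in> S \<Longrightarrow> ((\<lambda>p. f p y) has_real_derivative f' p y) (at p)"
    and d2: "\<And>p y. \<bar>p - p0\<bar> < d \<Longrightarrow> y \<in> S \<Longrightarrow> ((\<lambda>p. f' p y) has_real_derivative f'' p y) (at p)"
    and bound: "\<And>p y. \<bar>p - p0\<bar> < d \<Longrightarrow> y \<in> S \<Longrightarrow> \<bar>f'' p y\<bar> \<le> g y"
  shows "((\<lambda>p. integral S (f p)) has_real_derivative integral S (f' p0)) (at p0)"
proof (rule has_real_derivative_of_remainder_bound)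
  show "((\<lambda>p. integral S g * \<bar>p - p0\<bar>) \<longlongrightarrow> 0) (at p0)"
    by (auto intro!: tendsto_eq_intros)
  have "\<forall>\<^sub>F p in at p0. \<bar>p - p0\<bar> < d"
    using \<open>d > 0\<close> by (auto simp: eventually_at dist_real_def)
  then show "\<forall>\<^sub>F p in at p0. \<bar>integral S (f p) - integral S (f p0) - (p - p0) * integral S (f' p0)\<bar>
                \<le> \<bar>p - p0\<bar> * (integral S g * \<bar>p - p0\<bar>)"
  proof eventually_elim
    case (elim p)
    have p0: "\<bar>p0 - p0\<bar> < d" using \<open>d > 0\<close> by simp
    have taylor: "\<bar>f p y - f p0 y - (p - p0) * f' p0 y\<bar> \<le> (p - p0)\<^sup>2 * g y" if "y \<in> S" for y
      using second_order_remainder_bound[of p0 d "\<lambda>p. f p y" "\<lambda>p. f' p y" "\<lambda>p. f'' p y" "g y" p]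
        d1 d2 bound that elim by (simp add: mult.commute)
    have "integral S (f p) - integral S (f p0) - (p - p0) * integral S (f' p0)
        = integral S (\<lambda>y. f p y - f p0 y - (p - p0) * f' p0 y)"
      using int[OF elim] int[OF p0] int1
      by (simp add: Henstock_Kurzweil_Integration.integral_diff integrable_diff integrable_on_mult_right
          integral_mult_right)
    also have "\<bar>\<dots>\<bar> \<le> integral S (\<lambda>y. (p - p0)\<^sup>2 * g y)"
    proof -
      have "(\<lambda>y. f p y - f p0 y - (p - p0) * f' p0 y) integrable_on S"
        using int[OF elim] int[OF p0] int1 by (intro integrable_diff integrable_on_mult_right)
      from integral_norm_bound_integral[OF this integrable_on_mult_right[OF intg]] taylor
      show ?thesis by simp
    qed
    also have "\<dots> = \<bar>p - p0\<bar> * (integral S g * \<bar>p - p0\<bar>)"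
      by (simp add: power2_eq_square abs_mult_self_eq)
    finally show ?case .
  qed
qed

lemma has_real_derivative_integral_atMost_cross_term:
  fixes f f' :: "real \<Rightarrow> real \<Rightarrow> real" and b :: "real \<Rightarrow> real"
  assumes "d > 0"
    and cont: "\<And>p. \<bar>p - p0\<bar> < d \<Longrightarrow> continuous_on UNIV (f p)"
    and int: "\<And>p u. \<bar>p - p0\<bar> < d \<Longrightarrow> f p integrable_on {..u}"
    and deriv: "\<And>p y. \<bar>p - p0\<bar> < d \<Longrightarrow> ((\<lambda>p. f p y) has_real_derivative f' p y) (at p)"
    and bound: "\<And>p y. \<bar>p - p0\<bar> < d \<Longrightarrow> \<bar>f' p y\<bar> \<le> M"
    and "isCont b p0"
  shows "((\<lambda>p. integral {..b p} (\<lambda>y. f p y - f p0 y) - integral {..b p0} (\<lambda>y. f p y - f p0 y))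
           has_real_derivative 0) (at p0)"
proof -
  have p0: "\<bar>p0 - p0\<bar> < d" using \<open>d > 0\<close> by simp
  define R where "R p = integral {..b p} (\<lambda>y. f p y - f p0 y) - integral {..b p0} (\<lambda>y. f p y - f p0 y)" for p
  have "(R has_real_derivative 0) (at p0)"
  proof (rule has_real_derivative_of_remainder_bound)
    show "((\<lambda>p. M * \<bar>b p - b p0\<bar>) \<longlongrightarrow> 0) (at p0)"
      using \<open>isCont b p0\<close> by (auto simp: isCont_def intro!: tendsto_eq_intros)
    have "\<forall>\<^sub>F p in at p0. \<bar>p - p0\<bar> < d"
      using \<open>d > 0\<close> by (auto simp: eventually_at dist_real_def)
    then show "\<forall>\<^sub>F p in at p0. \<bar>R p - R p0 - (p - p0) * 0\<bar> \<le> \<bar>p - p0\<bar> * (M * \<bar>b p - b p0\<bar>)"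
    proof eventually_elim
      case (elim p)
      have lip: "\<bar>f p y - f p0 y\<bar> \<le> M * \<bar>p - p0\<bar>" for y
      proof -
        have "norm (f p y - f p0 y) \<le> M * norm (p - p0)"
        proof (rule field_differentiable_bound[OF convex_closed_segment])
          fix z assume "z \<in> closed_segment p0 p"
          then have "\<bar>z - p0\<bar> < d" using segment_bound1[of z p0 p] elim by simp
          then show "((\<lambda>p. f p y) has_field_derivative f' z y) (at z within closed_segment p0 p)"
            "norm (f' z y) \<le> M"
            using has_field_derivative_at_within[OF deriv] bound by auto
        qed auto
        then show ?thesis by simp
      qed
      have "\<bar>R p\<bar> \<le> (M * \<bar>p - p0\<bar>) * \<bar>b p - b p0\<bar>"
        unfolding R_def
      proof (rule abs_integral_atMost_diff_le)
        show "continuous_on UNIV (\<lambda>y. f p y - f p0 y)"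
          using cont[OF elim] cont[OF p0] by (rule continuous_on_diff)
        show "(\<lambda>y. f p y - f p0 y) integrable_on {..u}" for u
          using int[OF elim] int[OF p0] by (rule integrable_diff)
      qed (rule lip)
      moreover have "R p0 = 0" by (simp add: R_def)
      ultimately show ?case by (simp add: mult_ac)
    qed
  qed
  then show ?thesis by (simp add: R_def[abs_def])
qed

lemma has_real_derivative_integral_atMost_parametric:
  fixes f f' f'' :: "real \<Rightarrow> real \<Rightarrow> real" and g b :: "real \<Rightarrow> real"
  assumes "d > 0"
    and cont: "\<And>p. \<bar>p - p0\<bar> < d \<Longrightarrow> continuous_on UNIV (f p)"
    and int: "\<And>p u. \<bar>p - p0\<bar> < d \<Longrightarrow> f p integrable_on {..u}"
    and int1: "f' p0 integrable_on {..b p0}"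
    and intg: "g integrable_on {..b p0}"
    and d1: "\<And>p y. \<bar>p - p0\<bar> < d \<Longrightarrow> ((\<lambda>p. f p y) has_real_derivative f' p y) (at p)"
    and d2: "\<And>p y. \<bar>p - p0\<bar> < d \<Longrightarrow> ((\<lambda>p. f' p y) has_real_derivative f'' p y) (at p)"
    and bound2: "\<And>p y. \<bar>p - p0\<bar> < d \<Longrightarrow> y \<le> b p0 \<Longrightarrow> \<bar>f'' p y\<bar> \<le> g y"
    and bound1: "\<And>p y. \<bar>p - p0\<bar> < d \<Longrightarrow> \<bar>f' p y\<bar> \<le> M"
    and db: "(b has_real_derivative b') (at p0)"
  shows "((\<lambda>p. integral {..b p} (f p)) has_real_derivative
            integral {..b p0} (f' p0) + f p0 (b p0) * b') (at p0)"
proof -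
  have p0: "\<bar>p0 - p0\<bar> < d" using \<open>d > 0\<close> by simp
  define R where "R p = integral {..b p} (\<lambda>y. f p y - f p0 y) - integral {..b p0} (\<lambda>y. f p y - f p0 y)" for p
  have split: "integral {..b p} (f p) = integral {..b p0} (f p) + integral {..b p} (f p0) + R p
      - integral {..b p0} (f p0)" if "\<bar>p - p0\<bar> < d" for p
  proof -
    have "integral {..u} (\<lambda>y. f p y - f p0 y) = integral {..u} (f p) - integral {..u} (f p0)" for u
      using int[OF that] int[OF p0] by (rule Henstock_Kurzweil_Integration.integral_diff)
    then show ?thesis unfolding R_def by simp
  qed
  have fixed: "((\<lambda>p. integral {..b p0} (f p)) has_real_derivative integral {..b p0} (f' p0)) (at p0)"
    by (rule has_real_derivative_integral_parametric[OF \<open>d > 0\<close> int int1 intg d1 d2 bound2]) auto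
  have moving: "((\<lambda>p. integral {..b p} (f p0)) has_real_derivative f p0 (b p0) * b') (at p0)"
    by (rule DERIV_chain2[OF has_real_derivative_integral_atMost[OF cont[OF p0] int[OF p0]] db])
  have "(R has_real_derivative 0) (at p0)"
    unfolding R_def[abs_def]
    by (rule has_real_derivative_integral_atMost_cross_term[OF \<open>d > 0\<close> cont int d1 bound1 DERIV_isCont[OF db]])
  from DERIV_diff[OF DERIV_add[OF DERIV_add[OF fixed moving] this] DERIV_const[of "integral {..b p0} (f p0)"]]
  have "((\<lambda>p. integral {..b p0} (f p) + integral {..b p} (f p0) + R p - integral {..b p0} (f p0))
         has_real_derivative integral {..b p0} (f' p0) + f p0 (b p0) * b') (at p0)"
    by simp
  then show ?thesis
  proof (rule has_field_derivative_transform_within_open[where S = "ball p0 d"])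
    fix p assume "p \<in> ball p0 d"
    then have "\<bar>p - p0\<bar> < d" by (simp add: dist_real_def abs_minus_commute)
    from split[OF this] show "integral {..b p0} (f p) + integral {..b p} (f p0) + R p
        - integral {..b p0} (f p0) = integral {..b p} (f p)" by linarith
  qed (use \<open>d > 0\<close> in simp_all)
qed

lemma tendsto_integral_atLeastAtMost_at_bot:
  fixes f :: "real \<Rightarrow> real"
  assumes "f absolutely_integrable_on {..b}"
  shows "((\<lambda>a. integral {a..b} f) \<longlongrightarrow> integral {..b} f) at_bot"
proof -
  have "((\<lambda>a. set_lebesgue_integral lebesgue {a..b} f) \<longlongrightarrow> set_lebesgue_integral lebesgue {..b} f) at_bot"
    by (rule tendsto_set_lebesgue_integral_at_bot[OF _ assms]) auto
  moreover have "set_lebesgue_integral lebesgue {a..b} f = integral {a..b} f" for a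
    by (rule set_lebesgue_integral_eq_integral(2)[OF set_integrable_subset[OF assms]]) auto
  ultimately show ?thesis using set_lebesgue_integral_eq_integral(2)[OF assms] by simp
qed

lemma tendsto_integral_atLeastAtMost_at_top:
  fixes f :: "real \<Rightarrow> real"
  assumes "f absolutely_integrable_on {a..}"
  shows "((\<lambda>b. integral {a..b} f) \<longlongrightarrow> integral {a..} f) at_top"
proof -
  have "((\<lambda>b. set_lebesgue_integral lebesgue {a..b} f) \<longlongrightarrow> set_lebesgue_integral lebesgue {a..} f) at_top"
    by (rule tendsto_set_lebesgue_integral_at_top[OF _ assms]) auto
  moreover have "set_lebesgue_integral lebesgue {a..b} f = integral {a..b} f" for b
    by (rule set_lebesgue_integral_eq_integral(2)[OF set_integrable_subset[OF assms]]) auto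
  ultimately show ?thesis using set_lebesgue_integral_eq_integral(2)[OF assms] by simp
qed

lemma integral_atMost_eq_of_has_derivative:
  fixes \<psi> \<psi>' :: "real \<Rightarrow> real"
  assumes deriv: "\<And>y. (\<psi> has_real_derivative \<psi>' y) (at y)"
    and "\<psi>' absolutely_integrable_on {..b}"
    and "(\<psi> \<longlongrightarrow> 0) at_bot"
  shows "integral {..b} \<psi>' = \<psi> b"
proof -
  have "\<forall>\<^sub>F a in at_bot. integral {a..b} \<psi>' = \<psi> b - \<psi> a"
    using eventually_le_at_bot[of b]
  proof eventually_elim
    case (elim a)
    have "(\<psi>' has_integral (\<psi> b - \<psi> a)) {a..b}"
      using elim deriv by (intro fundamental_theorem_of_calculus)
        (auto simp flip: has_real_derivative_iff_has_vector_derivative intro: has_field_derivative_at_within)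
    then show ?case by (rule integral_unique)
  qed
  moreover have "((\<lambda>a. \<psi> b - \<psi> a) \<longlongrightarrow> \<psi> b) at_bot"
    using tendsto_diff[OF tendsto_const assms(3)] by simp
  ultimately have "((\<lambda>a. integral {a..b} \<psi>') \<longlongrightarrow> \<psi> b) at_bot"
    by (simp add: tendsto_cong)
  from tendsto_unique[OF _ tendsto_integral_atLeastAtMost_at_bot[OF assms(2)] this] show ?thesis
    by simp
qed

section \<open>The standard normal density and distribution function\<close>

lemma Ncdf_eq_integral: "Ncdf x = integral {..x} \<phi>"
  unfolding Ncdf_def std_normal_density_def by (simp add: field_simps)

lemma std_normal_density_le_1: "\<phi> t \<le> 1"
  unfolding std_normal_density_def using pi_gt3 by (intro mult_le_one) auto

lemma abs_mult_std_normal_density_le_1_of_le_exp: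
  fixes t :: real
  assumes "\<bar>f\<bar> \<le> exp (t\<^sup>2 / 2)"
  shows "\<bar>f * \<phi> t\<bar> \<le> 1"
proof -
  have "\<bar>f\<bar> * exp (- t\<^sup>2 / 2) \<le> exp (t\<^sup>2 / 2) * exp (- t\<^sup>2 / 2)"
    using assms by (intro mult_right_mono) auto
  also have "\<dots> = 1" by (simp flip: exp_add)
  finally have bound: "\<bar>f\<bar> * exp (- t\<^sup>2 / 2) \<le> 1" .
  have "1 / sqrt (2 * pi) \<le> 1" using pi_gt3 by simp
  from mult_le_one[OF this _ bound] show ?thesis
    by (simp add: std_normal_density_def abs_mult)
qed

lemma abs_mult_std_normal_density_le_1: "\<bar>t * \<phi> t\<bar> \<le> 1"
proof (rule abs_mult_std_normal_density_le_1_of_le_exp)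
  have "\<bar>t\<bar> \<le> 1 + t\<^sup>2 / 2"
    using sum_squares_ge_zero[of "\<bar>t\<bar> - 1" 0] by (simp add: power2_eq_square algebra_simps)
  also have "\<dots> \<le> exp (t\<^sup>2 / 2)" by (rule exp_ge_add_one_self)
  finally show "\<bar>t\<bar> \<le> exp (t\<^sup>2 / 2)" .
qed

lemma abs_square_minus_1_mult_std_normal_density_le_1: "\<bar>(t\<^sup>2 - 1) * \<phi> t\<bar> \<le> 1"
proof (rule abs_mult_std_normal_density_le_1_of_le_exp)
  have "\<bar>u - 1\<bar> \<le> 1 + u / 2 + (u / 2)\<^sup>2 / 2" if "0 \<le> u" for u :: real
    using that sum_squares_ge_zero[of "u - 2" 0] zero_le_square[of u]
    by (simp add: abs_le_iff power2_eq_square algebra_simps)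
  then have "\<bar>t\<^sup>2 - 1\<bar> \<le> 1 + t\<^sup>2 / 2 + (t\<^sup>2 / 2)\<^sup>2 / 2" by simp
  also have "\<dots> \<le> exp (t\<^sup>2 / 2)" by (rule exp_lower_Taylor_quadratic) simp
  finally show "\<bar>t\<^sup>2 - 1\<bar> \<le> exp (t\<^sup>2 / 2)" .
qed

lemma DERIV_std_normal_density: "(\<phi> has_real_derivative - t * \<phi> t) (at t)"
  unfolding std_normal_density_def[abs_def]
  by (auto intro!: derivative_eq_intros simp: power2_eq_square field_simps)

lemma DERIV_std_normal_density_comp [derivative_intros]:
  "(g has_real_derivative g') (at x within S) \<Longrightarrow>
   ((\<lambda>x. \<phi> (g x)) has_real_derivative - g x * \<phi> (g x) * g') (at x within S)"
  using DERIV_chain2[OF DERIV_std_normal_density] by blast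

lemma continuous_on_std_normal_density [continuous_intros]:
  "continuous_on S g \<Longrightarrow> continuous_on S (\<lambda>x. \<phi> (g x))"
  unfolding std_normal_density_def by (intro continuous_intros) auto

lemma continuous_std_normal_density: "continuous_on UNIV \<phi>"
  using continuous_on_std_normal_density[OF continuous_on_id] by simp

lemma std_normal_density_tendsto_at_bot: "(\<phi> \<longlongrightarrow> 0) at_bot"
  unfolding std_normal_density_def by real_asymp

lemma std_normal_density_moment_integrable_on:
  assumes "S \<in> sets borel"
  shows "(\<lambda>y. \<phi> y * \<bar>y\<bar> ^ k) integrable_on S"
proof -
  have "set_integrable lborel S (\<lambda>y. \<phi> y * \<bar>y\<bar> ^ k)"
    unfolding set_integrable_def
    using assms by (intro integrable_mult_indicator integrable_std_normal_moment_abs) auto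
  then show ?thesis by (rule set_borel_integral_eq_integral(1))
qed

lemma std_normal_density_integrable_on: "S \<in> sets borel \<Longrightarrow> \<phi> integrable_on S"
  using std_normal_density_moment_integrable_on[of S 0] by simp

lemma std_normal_density_absolutely_integrable_on: "S \<in> sets borel \<Longrightarrow> \<phi> absolutely_integrable_on S"
  by (rule absolutely_integrable_integrable_bound[of _ _ \<phi>]) (auto simp: std_normal_density_integrable_on)

lemma std_normal_density_has_integral_1: "(\<phi> has_integral 1) UNIV"
  using has_integral_integral_lborel[of \<phi>] by simp

lemma DERIV_Ncdf: "(Ncdf has_real_derivative \<phi> x) (at x)"
  unfolding Ncdf_eq_integral[abs_def]
  by (rule has_real_derivative_integral_atMost[OF continuous_std_normal_density])
     (simp add: std_normal_density_integrable_on)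

lemma DERIV_Ncdf_comp [derivative_intros]:
  "(g has_real_derivative g') (at x within S) \<Longrightarrow>
   ((\<lambda>x. Ncdf (g x)) has_real_derivative \<phi> (g x) * g') (at x within S)"
  using DERIV_chain2[OF DERIV_Ncdf] by blast

lemma continuous_on_Ncdf_comp [continuous_intros]:
  "continuous_on S g \<Longrightarrow> continuous_on S (\<lambda>x. Ncdf (g x))"
  using continuous_on_compose2[OF DERIV_continuous_on[OF DERIV_Ncdf]] by blast

lemma continuous_Ncdf: "continuous_on UNIV Ncdf"
  using continuous_on_Ncdf_comp[OF continuous_on_id] by simp

lemma tendsto_Ncdf [tendsto_intros]: "(f \<longlongrightarrow> a) F \<Longrightarrow> ((\<lambda>x. Ncdf (f x)) \<longlongrightarrow> Ncdf a) F"
  by (rule isCont_tendsto_compose[OF DERIV_isCont[OF DERIV_Ncdf]])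

lemma Ncdf_nonneg: "0 \<le> Ncdf x"
  unfolding Ncdf_eq_integral
  by (rule integral_nonneg) (simp_all add: std_normal_density_integrable_on)

lemma Ncdf_le_1: "Ncdf x \<le> 1"
proof -
  have "integral {..x} \<phi> \<le> integral UNIV \<phi>"
    by (rule integral_subset_le) (simp_all add: std_normal_density_integrable_on)
  then show ?thesis
    using std_normal_density_has_integral_1 unfolding Ncdf_eq_integral by (simp add: integral_unique)
qed

lemma abs_Ncdf_le_1: "\<bar>Ncdf x\<bar> \<le> 1"
  using Ncdf_nonneg Ncdf_le_1 by (simp add: abs_le_iff)

lemma abs_Ncdf_diff_le: "\<bar>Ncdf a - Ncdf b\<bar> \<le> \<bar>a - b\<bar>"
  using field_differentiable_bound[of UNIV Ncdf \<phi> 1 a b] DERIV_Ncdf std_normal_density_le_1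
  by simp

lemma Ncdf_tendsto_at_bot: "(Ncdf \<longlongrightarrow> 0) at_bot"
proof -
  have "((\<lambda>a. Ncdf 0 - integral {a..0} \<phi>) \<longlongrightarrow> Ncdf 0 - integral {..0} \<phi>) at_bot"
    by (intro tendsto_intros tendsto_integral_atLeastAtMost_at_bot
        std_normal_density_absolutely_integrable_on) simp
  moreover have "\<forall>\<^sub>F a in at_bot. Ncdf 0 - integral {a..0} \<phi> = Ncdf a"
    using eventually_le_at_bot[of 0]
    by eventually_elim (simp add: Ncdf_eq_integral integral_atMost_split[OF continuous_std_normal_density]
        std_normal_density_integrable_on)
  ultimately have "(Ncdf \<longlongrightarrow> Ncdf 0 - integral {..0} \<phi>) at_bot"
    by (rule Lim_transform_eventually)
  then show ?thesis by (simp add: Ncdf_eq_integral)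
qed

lemma Ncdf_tendsto_at_top: "(Ncdf \<longlongrightarrow> 1) at_top"
proof -
  have "((\<lambda>b. Ncdf 0 + integral {0..b} \<phi>) \<longlongrightarrow> Ncdf 0 + integral {0..} \<phi>) at_top"
    by (intro tendsto_intros tendsto_integral_atLeastAtMost_at_top
        std_normal_density_absolutely_integrable_on) simp
  moreover have "Ncdf 0 + integral {0..} \<phi> = 1"
  proof -
    have "negligible ({..0::real} \<inter> {0..})"
      by (intro negligible_subset[OF negligible_sing[of 0]]) auto
    then have "integral ({..0} \<union> {0..}) \<phi> = integral {..0} \<phi> + integral {0..} \<phi>"
      by (simp add: std_normal_density_integrable_on)
    moreover have "{..0::real} \<union> {0..} = UNIV" by auto
    ultimately show ?thesis
      using std_normal_density_has_integral_1 unfolding Ncdf_eq_integral by (simp add: integral_unique)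
  qed
  moreover have "\<forall>\<^sub>F b in at_top. Ncdf 0 + integral {0..b} \<phi> = Ncdf b"
    using eventually_ge_at_top[of 0]
    by eventually_elim (simp add: Ncdf_eq_integral integral_atMost_split[OF continuous_std_normal_density]
        std_normal_density_integrable_on)
  ultimately show ?thesis using Lim_transform_eventually by metis
qed

section \<open>Gaussian integrals of the form \<open>\<integral>\<^bsub>y \<le> b\<^esub> \<phi>(y) G(a - k y) dy\<close>\<close>

lemma gauss_weighted_integrable_on:
  "(\<lambda>y. \<phi> y * (c0 + c1 * \<bar>y\<bar> + c2 * y\<^sup>2)) integrable_on {..b}"
proof -
  have "(\<lambda>y. c0 * (\<phi> y * \<bar>y\<bar> ^ 0) + c1 * (\<phi> y * \<bar>y\<bar> ^ 1) + c2 * (\<phi> y * \<bar>y\<bar> ^ 2)) integrable_on {..b}"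
    by (intro integrable_add integrable_on_mult_right std_normal_density_moment_integrable_on) simp_all
  then show ?thesis by (simp add: algebra_simps)
qed

lemma gauss_dominated_absolutely_integrable_on:
  fixes f :: "real \<Rightarrow> real"
  assumes "continuous_on UNIV f" and bound: "\<And>y. \<bar>f y\<bar> \<le> \<phi> y * (c0 + c1 * \<bar>y\<bar> + c2 * y\<^sup>2)"
  shows "f absolutely_integrable_on {..b}"
proof (rule absolutely_integrable_integrable_bound[OF _ _ gauss_weighted_integrable_on])
  show "f integrable_on {..b}"
    by (rule measurable_bounded_by_integrable_imp_integrable[OF _ gauss_weighted_integrable_on])
       (use continuous_imp_measurable_on_sets_lebesgue[OF continuous_on_subset[OF assms(1)], of "{..b}"]
          bound in auto)
qed (use bound in auto)

lemma gauss_dominated_integrable_on: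
  fixes f :: "real \<Rightarrow> real"
  assumes "continuous_on UNIV f" "\<And>y. \<bar>f y\<bar> \<le> \<phi> y * (c0 + c1 * \<bar>y\<bar> + c2 * y\<^sup>2)"
  shows "f integrable_on {..b}"
  using gauss_dominated_absolutely_integrable_on[OF assms] by (rule set_lebesgue_integral_eq_integral(1))

definition gauss_integral :: "(real \<Rightarrow> real) \<Rightarrow> real \<Rightarrow> real \<Rightarrow> real \<Rightarrow> real" where
  "gauss_integral G b a k = integral {..b} (\<lambda>y. \<phi> y * G (a - k * y))"

lemma bounded_gauss_integrable_on:
  fixes G :: "real \<Rightarrow> real"
  assumes "continuous_on UNIV G" and G: "\<And>u. \<bar>G u\<bar> \<le> 1"
  shows "(\<lambda>y. \<phi> y * G (a - k * y)) integrable_on {..b}"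
    and "(\<lambda>y. y * \<phi> y * G (a - k * y)) integrable_on {..b}"
proof -
  have cont: "continuous_on UNIV (\<lambda>y. G (a - k * y))"
    by (rule continuous_on_compose2[OF assms(1)]) (auto intro: continuous_intros)
  have "\<bar>\<phi> y * G (a - k * y)\<bar> \<le> \<phi> y * (1 + 0 * \<bar>y\<bar> + 0 * y\<^sup>2)" for y
    using mult_left_mono[OF G normal_density_nonneg[of 0 1 y]] by (simp add: abs_mult)
  then show "(\<lambda>y. \<phi> y * G (a - k * y)) integrable_on {..b}"
    by (rule gauss_dominated_integrable_on[rotated]) (intro continuous_intros cont)
  have "\<bar>y * \<phi> y * G (a - k * y)\<bar> \<le> \<phi> y * (0 + 1 * \<bar>y\<bar> + 0 * y\<^sup>2)" for y
    using mult_left_mono[OF G[of "a - k * y"], of "\<phi> y * \<bar>y\<bar>"] by (simp add: abs_mult mult_ac)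
  then show "(\<lambda>y. y * \<phi> y * G (a - k * y)) integrable_on {..b}"
    by (rule gauss_dominated_integrable_on[rotated]) (intro continuous_intros cont)
qed

lemma gauss_integrand_derivative_bounds:
  fixes g' g'' a' a'' k' k'' B y :: real
  assumes "\<bar>g'\<bar> \<le> 1" "\<bar>g''\<bar> \<le> 1" "\<bar>a'\<bar> \<le> B" "\<bar>a''\<bar> \<le> B" "\<bar>k'\<bar> \<le> B" "\<bar>k''\<bar> \<le> B"
  shows "\<bar>\<phi> y * g' * (a' - k' * y)\<bar> \<le> 2 * B"
    and "\<bar>\<phi> y * (g'' * (a' - k' * y)\<^sup>2 + g' * (a'' - k'' * y))\<bar>
           \<le> \<phi> y * (2 * B\<^sup>2 + B + B * \<bar>y\<bar> + 2 * B\<^sup>2 * y\<^sup>2)"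
proof -
  have lin: "\<bar>a - k * y\<bar> \<le> B + B * \<bar>y\<bar>" if "\<bar>a\<bar> \<le> B" "\<bar>k\<bar> \<le> B" for a k
    using abs_triangle_ineq4[of a "k * y"] mult_right_mono[OF that(2), of "\<bar>y\<bar>"] that(1)
    by (simp add: abs_mult)
  have B: "0 \<le> B" using assms(3) by linarith
  have "\<bar>\<phi> y * g' * (a' - k' * y)\<bar> \<le> \<phi> y * (B + B * \<bar>y\<bar>)"
    using mult_left_mono[OF mult_mono[OF assms(1) lin[OF assms(3,5)]], of "\<phi> y"]
    by (simp add: abs_mult mult.assoc)
  also have "\<dots> = B * \<phi> y + B * \<bar>y * \<phi> y\<bar>" by (simp add: algebra_simps abs_mult)
  also have "\<dots> \<le> B * 1 + B * 1"
    using B std_normal_density_le_1 abs_mult_std_normal_density_le_1 by (intro add_mono mult_left_mono)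
  finally show "\<bar>\<phi> y * g' * (a' - k' * y)\<bar> \<le> 2 * B" by simp
  have sq: "(a' - k' * y)\<^sup>2 \<le> 2 * B\<^sup>2 + 2 * B\<^sup>2 * y\<^sup>2"
  proof -
    have "(a' - k' * y)\<^sup>2 \<le> (B + B * \<bar>y\<bar>)\<^sup>2"
      using power_mono[OF lin[OF assms(3,5)] abs_ge_zero, of 2] by simp
    also have "\<dots> \<le> 2 * B\<^sup>2 + 2 * B\<^sup>2 * y\<^sup>2"
      using sum_squares_ge_zero[of "B - B * \<bar>y\<bar>" 0] by (simp add: power2_eq_square algebra_simps)
    finally show ?thesis .
  qed
  have bound: "\<bar>g'' * (a' - k' * y)\<^sup>2 + g' * (a'' - k'' * y)\<bar>
      \<le> 1 * (2 * B\<^sup>2 + 2 * B\<^sup>2 * y\<^sup>2) + 1 * (B + B * \<bar>y\<bar>)"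
    using abs_triangle_ineq[of "g'' * (a' - k' * y)\<^sup>2" "g' * (a'' - k'' * y)"]
      mult_mono[OF assms(2) sq] mult_mono[OF assms(1) lin[OF assms(4,6)]]
    by (simp add: abs_mult)
  have "\<bar>\<phi> y * (g'' * (a' - k' * y)\<^sup>2 + g' * (a'' - k'' * y))\<bar>
      = \<phi> y * \<bar>g'' * (a' - k' * y)\<^sup>2 + g' * (a'' - k'' * y)\<bar>"
    by (simp add: abs_mult)
  also have "\<dots> \<le> \<phi> y * (1 * (2 * B\<^sup>2 + 2 * B\<^sup>2 * y\<^sup>2) + 1 * (B + B * \<bar>y\<bar>))"
    by (rule mult_left_mono[OF bound]) simp
  also have "\<dots> = \<phi> y * (2 * B\<^sup>2 + B + B * \<bar>y\<bar> + 2 * B\<^sup>2 * y\<^sup>2)"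
    by (simp add: algebra_simps)
  finally show "\<bar>\<phi> y * (g'' * (a' - k' * y)\<^sup>2 + g' * (a'' - k'' * y))\<bar>
      \<le> \<phi> y * (2 * B\<^sup>2 + B + B * \<bar>y\<bar> + 2 * B\<^sup>2 * y\<^sup>2)" .
qed

lemma has_real_derivative_gauss_integral_local:
  fixes G G' G'' a a' a'' k k' k'' b :: "real \<Rightarrow> real"
  assumes G: "\<And>u. (G has_real_derivative G' u) (at u)" "\<And>u. (G' has_real_derivative G'' u) (at u)"
    and G_bound: "\<And>u. \<bar>G u\<bar> \<le> 1" "\<And>u. \<bar>G' u\<bar> \<le> 1" "\<And>u. \<bar>G'' u\<bar> \<le> 1"
    and "d > 0"
    and near: "\<And>p. \<bar>p - p0\<bar> < d \<Longrightarrow>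
      (a has_real_derivative a' p) (at p) \<and> (a' has_real_derivative a'' p) (at p) \<and>
      (k has_real_derivative k' p) (at p) \<and> (k' has_real_derivative k'' p) (at p) \<and>
      \<bar>a' p\<bar> \<le> B \<and> \<bar>a'' p\<bar> \<le> B \<and> \<bar>k' p\<bar> \<le> B \<and> \<bar>k'' p\<bar> \<le> B"
    and b: "(b has_real_derivative b') (at p0)"
  shows "((\<lambda>p. gauss_integral G (b p) (a p) (k p)) has_real_derivative
           a' p0 * gauss_integral G' (b p0) (a p0) (k p0)
           - k' p0 * integral {..b p0} (\<lambda>y. y * \<phi> y * G' (a p0 - k p0 * y))
           + \<phi> (b p0) * G (a p0 - k p0 * b p0) * b') (at p0)"
proof -
  have cont_G: "continuous_on UNIV G" "continuous_on UNIV G'"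
    by (rule DERIV_continuous_on, rule G(1)) (rule DERIV_continuous_on, rule G(2))
  note int_G = bounded_gauss_integrable_on[OF cont_G(1) G_bound(1)]
  note int_G' = bounded_gauss_integrable_on[OF cont_G(2) G_bound(2)]
  define f where "f p y = \<phi> y * G (a p - k p * y)" for p y
  define f' where "f' p y = \<phi> y * G' (a p - k p * y) * (a' p - k' p * y)" for p y
  define f'' where "f'' p y = \<phi> y * (G'' (a p - k p * y) * (a' p - k' p * y)\<^sup>2
      + G' (a p - k p * y) * (a'' p - k'' p * y))" for p y
  define g where "g y = \<phi> y * (2 * B\<^sup>2 + B + B * \<bar>y\<bar> + 2 * B\<^sup>2 * y\<^sup>2)" for y
  have f'_p0: "f' p0 = (\<lambda>y. a' p0 * (\<phi> y * G' (a p0 - k p0 * y)) - k' p0 * (y * \<phi> y * G' (a p0 - k p0 * y)))"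
    by (auto simp: f'_def algebra_simps)
  have "((\<lambda>p. integral {..b p} (f p)) has_real_derivative integral {..b p0} (f' p0) + f p0 (b p0) * b')
      (at p0)"
  proof (rule has_real_derivative_integral_atMost_parametric[OF \<open>d > 0\<close>, where f'' = f'' and g = g
        and M = "2 * B"])
    fix p assume p: "\<bar>p - p0\<bar> < d"
    show "continuous_on UNIV (f p)"
      unfolding f_def by (intro continuous_intros continuous_on_compose2[OF cont_G(1)]) auto
    show "f p integrable_on {..u}" for u
      unfolding f_def by (rule int_G(1))
    fix y
    have du: "((\<lambda>p. a p - k p * y) has_real_derivative a' p - k' p * y) (at p)"
      and du': "((\<lambda>p. a' p - k' p * y) has_real_derivative a'' p - k'' p * y) (at p)"
      using near[OF p] by (auto intro!: derivative_eq_intros)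
    show "((\<lambda>p. f p y) has_real_derivative f' p y) (at p)"
      unfolding f_def f'_def using DERIV_cmult[OF DERIV_chain2[OF G(1) du], of "\<phi> y"]
      by (simp add: mult.assoc)
    show "((\<lambda>p. f' p y) has_real_derivative f'' p y) (at p)"
      unfolding f'_def f''_def using DERIV_cmult[OF DERIV_mult[OF DERIV_chain2[OF G(2) du] du'], of "\<phi> y"]
      by (simp add: power2_eq_square algebra_simps)
    show "\<bar>f'' p y\<bar> \<le> g y" "\<bar>f' p y\<bar> \<le> 2 * B"
      unfolding f'_def f''_def g_def using near[OF p] G_bound
      by (auto intro!: gauss_integrand_derivative_bounds)
  next
    show "f' p0 integrable_on {..b p0}"
      unfolding f'_p0 by (intro integrable_diff integrable_on_mult_right int_G')
    show "g integrable_on {..b p0}"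
      unfolding g_def by (rule gauss_weighted_integrable_on)
  qed (rule b)
  moreover have "integral {..b p0} (f' p0) = a' p0 * gauss_integral G' (b p0) (a p0) (k p0)
      - k' p0 * integral {..b p0} (\<lambda>y. y * \<phi> y * G' (a p0 - k p0 * y))"
    unfolding f'_p0 gauss_integral_def
    by (simp add: Henstock_Kurzweil_Integration.integral_diff integral_mult_right integrable_on_mult_right int_G')
  ultimately show ?thesis unfolding f_def[abs_def] gauss_integral_def by simp
qed

lemma eventually_abs_le_of_isCont:
  fixes f :: "real \<Rightarrow> real"
  assumes "isCont f x"
  shows "\<forall>\<^sub>F y in nhds x. \<bar>f y\<bar> \<le> \<bar>f x\<bar> + 1"
proof -
  have "(f \<longlongrightarrow> f x) (nhds x)"
    using assms by (simp add: isCont_def tendsto_at_iff_tendsto_nhds)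
  from tendstoD[OF this zero_less_one] show ?thesis
    by eventually_elim (auto simp: dist_real_def)
qed

lemma has_real_derivative_gauss_integral:
  fixes G G' G'' a a' a'' k k' k'' b :: "real \<Rightarrow> real"
  assumes G: "\<And>u. (G has_real_derivative G' u) (at u)" "\<And>u. (G' has_real_derivative G'' u) (at u)"
    and G_bound: "\<And>u. \<bar>G u\<bar> \<le> 1" "\<And>u. \<bar>G' u\<bar> \<le> 1" "\<And>u. \<bar>G'' u\<bar> \<le> 1"
    and a_deriv: "\<forall>\<^sub>F p in nhds p0. (a has_real_derivative a' p) (at p) \<and> (a' has_real_derivative a'' p) (at p)"
    and k_deriv: "\<forall>\<^sub>F p in nhds p0. (k has_real_derivative k' p) (at p) \<and> (k' has_real_derivative k'' p) (at p)"
    and cont: "isCont a'' p0" "isCont k'' p0"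
    and b: "(b has_real_derivative b') (at p0)"
  shows "((\<lambda>p. gauss_integral G (b p) (a p) (k p)) has_real_derivative
           a' p0 * gauss_integral G' (b p0) (a p0) (k p0)
           - k' p0 * integral {..b p0} (\<lambda>y. y * \<phi> y * G' (a p0 - k p0 * y))
           + \<phi> (b p0) * G (a p0 - k p0 * b p0) * b') (at p0)"
proof -
  define B where "B = max (max (\<bar>a' p0\<bar> + 1) (\<bar>a'' p0\<bar> + 1)) (max (\<bar>k' p0\<bar> + 1) (\<bar>k'' p0\<bar> + 1))"
  have "isCont a' p0" "isCont k' p0"
    using eventually_nhds_x_imp_x[OF a_deriv] eventually_nhds_x_imp_x[OF k_deriv] by (auto intro: DERIV_isCont)
  from this[THEN eventually_abs_le_of_isCont]
  have "\<forall>\<^sub>F p in nhds p0. \<bar>a' p\<bar> \<le> B \<and> \<bar>a'' p\<bar> \<le> B \<and> \<bar>k' p\<bar> \<le> B \<and> \<bar>k'' p\<bar> \<le> B"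
    using cont[THEN eventually_abs_le_of_isCont]
  proof eventually_elim
    case (elim p)
    have "\<bar>a' p0\<bar> + 1 \<le> B" "\<bar>a'' p0\<bar> + 1 \<le> B" "\<bar>k' p0\<bar> + 1 \<le> B" "\<bar>k'' p0\<bar> + 1 \<le> B"
      unfolding B_def by linarith+
    with elim show ?case by linarith
  qed
  with a_deriv k_deriv have "\<forall>\<^sub>F p in nhds p0.
      (a has_real_derivative a' p) (at p) \<and> (a' has_real_derivative a'' p) (at p) \<and>
      (k has_real_derivative k' p) (at p) \<and> (k' has_real_derivative k'' p) (at p) \<and>
      \<bar>a' p\<bar> \<le> B \<and> \<bar>a'' p\<bar> \<le> B \<and> \<bar>k' p\<bar> \<le> B \<and> \<bar>k'' p\<bar> \<le> B"
    by eventually_elim blast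
  then obtain d where "d > 0" and "\<And>p. \<bar>p - p0\<bar> < d \<Longrightarrow>
      (a has_real_derivative a' p) (at p) \<and> (a' has_real_derivative a'' p) (at p) \<and>
      (k has_real_derivative k' p) (at p) \<and> (k' has_real_derivative k'' p) (at p) \<and>
      \<bar>a' p\<bar> \<le> B \<and> \<bar>a'' p\<bar> \<le> B \<and> \<bar>k' p\<bar> \<le> B \<and> \<bar>k'' p\<bar> \<le> B"
    unfolding eventually_nhds_metric dist_real_def by blast
  from has_real_derivative_gauss_integral_local[OF G G_bound this b] show ?thesis .
qed

lemma integral_mult_std_normal_density:
  "integral {..b} (\<lambda>y. y * \<phi> y * \<phi> (a - k * y))
     = - \<phi> b * \<phi> (a - k * b) - k * gauss_integral (\<lambda>u. - u * \<phi> u) b a k"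
proof -
  let ?\<psi> = "\<lambda>y. \<phi> y * \<phi> (a - k * y)"
  let ?\<psi>' = "\<lambda>y. k * (\<phi> y * ((a - k * y) * \<phi> (a - k * y))) - y * \<phi> y * \<phi> (a - k * y)"
  have "integral {..b} ?\<psi>' = ?\<psi> b"
  proof (rule integral_atMost_eq_of_has_derivative)
    show "(?\<psi> has_real_derivative ?\<psi>' y) (at y)" for y
      by (auto intro!: derivative_eq_intros simp: algebra_simps)
    show "?\<psi>' absolutely_integrable_on {..b}"
    proof (rule gauss_dominated_absolutely_integrable_on[where ?c0.0 = "\<bar>k\<bar>" and ?c1.0 = 1 and ?c2.0 = 0])
      fix y
      have "\<bar>?\<psi>' y\<bar> \<le> \<bar>k\<bar> * (\<phi> y * \<bar>(a - k * y) * \<phi> (a - k * y)\<bar>) + \<phi> y * \<bar>y\<bar> * \<phi> (a - k * y)"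
        using abs_triangle_ineq4[of "k * (\<phi> y * ((a - k * y) * \<phi> (a - k * y)))" "y * \<phi> y * \<phi> (a - k * y)"]
        by (simp add: abs_mult mult_ac)
      also have "\<dots> \<le> \<bar>k\<bar> * (\<phi> y * 1) + \<phi> y * \<bar>y\<bar> * 1"
        using abs_mult_std_normal_density_le_1 std_normal_density_le_1
        by (intro add_mono mult_left_mono) auto
      finally show "\<bar>?\<psi>' y\<bar> \<le> \<phi> y * (\<bar>k\<bar> + 1 * \<bar>y\<bar> + 0 * y\<^sup>2)"
        by (simp add: algebra_simps)
    qed (intro continuous_intros)
    show "(?\<psi> \<longlongrightarrow> 0) at_bot"
    proof (rule tendsto_sandwich[OF _ _ tendsto_const std_normal_density_tendsto_at_bot])
      show "\<forall>\<^sub>F y in at_bot. 0 \<le> ?\<psi> y" by simp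
      show "\<forall>\<^sub>F y in at_bot. ?\<psi> y \<le> \<phi> y"
        by (intro always_eventually allI mult_left_le std_normal_density_le_1) simp
    qed
  qed
  moreover have "integral {..b} ?\<psi>' = - k * gauss_integral (\<lambda>u. - u * \<phi> u) b a k
      - integral {..b} (\<lambda>y. y * \<phi> y * \<phi> (a - k * y))"
  proof -
    have "continuous_on UNIV (\<lambda>u. u * \<phi> u)" by (intro continuous_intros)
    from bounded_gauss_integrable_on(1)[OF this abs_mult_std_normal_density_le_1]
      bounded_gauss_integrable_on(2)[OF continuous_std_normal_density]
    have "(\<lambda>y. \<phi> y * ((a - k * y) * \<phi> (a - k * y))) integrable_on {..b}"
      "(\<lambda>y. y * \<phi> y * \<phi> (a - k * y)) integrable_on {..b}"
      using std_normal_density_le_1 by simp_all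
    then show ?thesis
      by (simp add: gauss_integral_def Henstock_Kurzweil_Integration.integral_diff integral_mult_right
          integrable_on_mult_right)
  qed
  ultimately show ?thesis by simp
qed

lemma has_real_derivative_gauss_integral_Ncdf:
  fixes a a' a'' k k' k'' b :: "real \<Rightarrow> real"
  assumes "\<forall>\<^sub>F p in nhds p0. (a has_real_derivative a' p) (at p) \<and> (a' has_real_derivative a'' p) (at p)"
    and "\<forall>\<^sub>F p in nhds p0. (k has_real_derivative k' p) (at p) \<and> (k' has_real_derivative k'' p) (at p)"
    and "isCont a'' p0" "isCont k'' p0" "(b has_real_derivative b') (at p0)"
  shows "((\<lambda>p. gauss_integral Ncdf (b p) (a p) (k p)) has_real_derivative
           a' p0 * gauss_integral \<phi> (b p0) (a p0) (k p0)
           + k' p0 * (\<phi> (b p0) * \<phi> (a p0 - k p0 * b p0)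
                      + k p0 * gauss_integral (\<lambda>u. - u * \<phi> u) (b p0) (a p0) (k p0))
           + \<phi> (b p0) * Ncdf (a p0 - k p0 * b p0) * b') (at p0)"
proof -
  have "\<bar>\<phi> u\<bar> \<le> 1" "\<bar>- u * \<phi> u\<bar> \<le> 1" for u
    using std_normal_density_le_1 abs_mult_std_normal_density_le_1 by simp_all
  from has_real_derivative_gauss_integral[OF DERIV_Ncdf DERIV_std_normal_density abs_Ncdf_le_1 this assms]
  show ?thesis unfolding integral_mult_std_normal_density by (simp add: algebra_simps)
qed

lemma has_real_derivative_gauss_integral_std_normal_density:
  fixes a a' a'' b :: "real \<Rightarrow> real"
  assumes "\<forall>\<^sub>F p in nhds p0. (a has_real_derivative a' p) (at p) \<and> (a' has_real_derivative a'' p) (at p)"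
    and "isCont a'' p0" "(b has_real_derivative b') (at p0)"
  shows "((\<lambda>p. gauss_integral \<phi> (b p) (a p) k) has_real_derivative
           a' p0 * gauss_integral (\<lambda>u. - u * \<phi> u) (b p0) (a p0) k
           + \<phi> (b p0) * \<phi> (a p0 - k * b p0) * b') (at p0)"
proof -
  have "((\<lambda>u. - u * \<phi> u) has_real_derivative (u\<^sup>2 - 1) * \<phi> u) (at u)" for u
    by (auto intro!: derivative_eq_intros simp: power2_eq_square algebra_simps)
  from has_real_derivative_gauss_integral[OF DERIV_std_normal_density this _ _ _ assms(1) _ assms(2) _ assms(3),
      of "\<lambda>_. k" "\<lambda>_. 0" "\<lambda>_. 0"]
  show ?thesis
    using std_normal_density_le_1 abs_mult_std_normal_density_le_1 abs_square_minus_1_mult_std_normal_density_le_1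
    by simp
qed

lemma abs_gauss_integral_Ncdf_minus_le:
  "\<bar>gauss_integral Ncdf b a k - Ncdf a0 * Ncdf b\<bar> \<le> \<bar>a - a0\<bar> + \<bar>k\<bar> * integral UNIV (\<lambda>y. \<phi> y * \<bar>y\<bar>)"
proof -
  have int_abs: "(\<lambda>y. \<phi> y * \<bar>y\<bar>) integrable_on {..b}" "(\<lambda>y. \<phi> y * \<bar>y\<bar>) integrable_on UNIV"
    using std_normal_density_moment_integrable_on[of _ 1] by simp_all
  have int_\<phi>: "\<phi> integrable_on {..b}" by (simp add: std_normal_density_integrable_on)
  have int_Ncdf: "(\<lambda>y. \<phi> y * Ncdf (a - k * y)) integrable_on {..b}"
    by (rule bounded_gauss_integrable_on(1)[OF continuous_Ncdf abs_Ncdf_le_1])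
  have int_const: "(\<lambda>y. \<phi> y * Ncdf a0) integrable_on {..b}"
    by (rule integrable_on_mult_left[OF int_\<phi>])
  have int_diff: "(\<lambda>y. \<phi> y * Ncdf (a - k * y) - \<phi> y * Ncdf a0) integrable_on {..b}"
    by (rule integrable_diff[OF int_Ncdf int_const])
  let ?g = "\<lambda>y. \<bar>a - a0\<bar> * \<phi> y + \<bar>k\<bar> * (\<phi> y * \<bar>y\<bar>)"
  have "\<bar>gauss_integral Ncdf b a k - Ncdf a0 * Ncdf b\<bar>
      = \<bar>integral {..b} (\<lambda>y. \<phi> y * Ncdf (a - k * y) - \<phi> y * Ncdf a0)\<bar>"
    unfolding gauss_integral_def Henstock_Kurzweil_Integration.integral_diff[OF int_Ncdf int_const]
      integral_mult_left Ncdf_eq_integral[of b]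
    by (simp add: mult.commute)
  also have "\<dots> \<le> integral {..b} ?g"
  proof (rule integral_norm_bound_integral[OF int_diff, simplified])
    show "?g integrable_on {..b}"
      by (intro integrable_add integrable_on_mult_right int_\<phi> int_abs(1))
    fix y
    have lip: "\<bar>Ncdf (a - k * y) - Ncdf a0\<bar> \<le> \<bar>a - a0\<bar> + \<bar>k\<bar> * \<bar>y\<bar>"
      using abs_Ncdf_diff_le[of "a - k * y" a0] abs_triangle_ineq4[of "a - a0" "k * y"]
      unfolding Groups.diff_right_commute[of a "k * y" a0] abs_mult by linarith
    have "\<bar>\<phi> y * Ncdf (a - k * y) - \<phi> y * Ncdf a0\<bar> = \<phi> y * \<bar>Ncdf (a - k * y) - Ncdf a0\<bar>"
      by (simp add: abs_mult flip: right_diff_distrib)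
    also have "\<dots> \<le> \<phi> y * (\<bar>a - a0\<bar> + \<bar>k\<bar> * \<bar>y\<bar>)"
      by (rule mult_left_mono[OF lip]) simp
    also have "\<dots> = ?g y" by (simp add: algebra_simps)
    finally show "\<bar>\<phi> y * Ncdf (a - k * y) - \<phi> y * Ncdf a0\<bar> \<le> ?g y" .
  qed
  also have "\<dots> = \<bar>a - a0\<bar> * Ncdf b + \<bar>k\<bar> * integral {..b} (\<lambda>y. \<phi> y * \<bar>y\<bar>)"
    unfolding integral_add[OF integrable_on_mult_right[OF int_\<phi>] integrable_on_mult_right[OF int_abs(1)]]
      integral_mult_right Ncdf_eq_integral ..
  also have "\<dots> \<le> \<bar>a - a0\<bar> * 1 + \<bar>k\<bar> * integral UNIV (\<lambda>y. \<phi> y * \<bar>y\<bar>)"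
  proof -
    have "integral {..b} (\<lambda>y. \<phi> y * \<bar>y\<bar>) \<le> integral UNIV (\<lambda>y. \<phi> y * \<bar>y\<bar>)"
      by (rule integral_subset_le[OF subset_UNIV int_abs]) simp
    then show ?thesis by (intro add_mono mult_left_mono Ncdf_le_1) simp_all
  qed
  finally show ?thesis by simp
qed

lemma bivariate_normal_density_factor:
  assumes "\<bar>\<rho>\<bar> < 1"
  shows "exp (- (x\<^sup>2 - 2 * \<rho> * x * y + y\<^sup>2) / (2 * (1 - \<rho>\<^sup>2))) / (2 * pi * sqrt (1 - \<rho>\<^sup>2))
       = \<phi> y * (\<phi> ((x - \<rho> * y) / sqrt (1 - \<rho>\<^sup>2)) / sqrt (1 - \<rho>\<^sup>2))"
proof -
  define s where "s = sqrt (1 - \<rho>\<^sup>2)"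
  have \<rho>: "\<rho>\<^sup>2 < 1" using assms by (simp add: abs_square_less_1)
  then have s: "s > 0" "s\<^sup>2 = 1 - \<rho>\<^sup>2" by (simp_all add: s_def)
  have "- (x\<^sup>2 - 2 * \<rho> * x * y + y\<^sup>2) / (2 * (1 - \<rho>\<^sup>2)) = - y\<^sup>2 / 2 + - ((x - \<rho> * y)\<^sup>2 / (1 - \<rho>\<^sup>2)) / 2"
    using \<rho> by (simp add: field_simps) (simp add: power2_eq_square power4_eq_xxxx algebra_simps)
  also have "(x - \<rho> * y)\<^sup>2 / (1 - \<rho>\<^sup>2) = ((x - \<rho> * y) / s)\<^sup>2"
    by (simp add: power_divide s(2))
  finally have exponent: "- (x\<^sup>2 - 2 * \<rho> * x * y + y\<^sup>2) / (2 * (1 - \<rho>\<^sup>2)) = - y\<^sup>2 / 2 + - ((x - \<rho> * y) / s)\<^sup>2 / 2" .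
  moreover have "sqrt (2 * pi) * sqrt (2 * pi) = 2 * pi" by simp
  ultimately show ?thesis
    unfolding s_def[symmetric] std_normal_density_def exponent exp_add using s by (simp add: field_simps)
qed

lemma nn_integral_indicator_std_normal_density_affine:
  assumes "s > 0"
  shows "(\<integral>\<^sup>+x. ennreal (indicator {..a} x * (\<phi> ((x - t) / s) / s)) \<partial>lborel) = ennreal (Ncdf ((a - t) / s))"
proof (rule nn_integral_has_integral_lborel)
  define u where "u = (a - t) / s"
  let ?h = "\<lambda>x. indicator {..a} x * (\<phi> ((x - t) / s) / s) :: real"
  let ?k = "\<lambda>x. indicator {..u} x * \<phi> x :: real"
  show "?h \<in> borel_measurable borel"
    using assms by (intro borel_measurable_times borel_measurable_indicator borel_measurable_continuous_onI
        continuous_intros) auto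
  show "0 \<le> ?h x" for x using assms by simp
  have hk: "?h (t + s * x) = ?k x / s" for x
  proof -
    have "(t + s * x \<le> a) = (x \<le> u)" using assms unfolding u_def by (simp add: field_simps)
    then show ?thesis using assms by (simp add: indicator_def)
  qed
  have k: "set_integrable lborel {..u} \<phi>"
    unfolding set_integrable_def by (intro integrable_mult_indicator) auto
  then have "integrable lborel (\<lambda>x. ?h (t + s * x))"
    unfolding hk set_integrable_def by simp
  then have h: "integrable lborel ?h"
    using lborel_integrable_real_affine_iff[of s ?h t] assms by simp
  have "(\<integral>x. ?h x \<partial>lborel) = \<bar>s\<bar> *\<^sub>R (\<integral>x. ?h (t + s * x) \<partial>lborel)"
    using assms by (intro lborel_integral_real_affine) simp
  also have "\<dots> = set_lebesgue_integral lborel {..u} \<phi>"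
    unfolding hk using assms by (simp add: set_lebesgue_integral_def)
  also have "\<dots> = Ncdf u"
    using set_borel_integral_eq_integral(2)[OF k] by (simp add: Ncdf_eq_integral)
  finally show "(?h has_integral Ncdf ((a - t) / s)) UNIV"
    using has_integral_integral_lborel[OF h] unfolding u_def by simp
qed

lemma nn_integral_section_conditional_std_normal_density:
  assumes "s > 0"
  shows "(\<integral>\<^sup>+x. ennreal (indicator ({..a} \<times> {..b}) (x, y) * (\<phi> y * (\<phi> ((x - \<rho> * y) / s) / s))) \<partial>lborel)
           = ennreal (indicator {..b} y * (\<phi> y * Ncdf ((a - \<rho> * y) / s)))"
proof -
  let ?k = "\<lambda>x. indicator {..a} x * (\<phi> ((x - \<rho> * y) / s) / s) :: real"
  have [measurable]: "?k \<in> borel_measurable borel"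
    using assms by (intro borel_measurable_times borel_measurable_indicator borel_measurable_continuous_onI
        continuous_intros) auto
  have "(\<lambda>x. ennreal (indicator ({..a} \<times> {..b}) (x, y) * (\<phi> y * (\<phi> ((x - \<rho> * y) / s) / s))))
      = (\<lambda>x. ennreal (indicator {..b} y * \<phi> y) * ennreal (?k x))"
    using assms by (auto simp: indicator_def ennreal_mult'[symmetric])
  then have "(\<integral>\<^sup>+x. ennreal (indicator ({..a} \<times> {..b}) (x, y) * (\<phi> y * (\<phi> ((x - \<rho> * y) / s) / s))) \<partial>lborel)
      = ennreal (indicator {..b} y * \<phi> y) * (\<integral>\<^sup>+x. ennreal (?k x) \<partial>lborel)"
    by (simp add: nn_integral_cmult)
  also have "\<dots> = ennreal (indicator {..b} y * \<phi> y) * ennreal (Ncdf ((a - \<rho> * y) / s))"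
    by (simp only: nn_integral_indicator_std_normal_density_affine[OF assms])
  finally show ?thesis
    by (simp add: indicator_def ennreal_mult'[symmetric])
qed

lemma has_integral_conditional_std_normal_density:
  assumes "s > 0"
  shows "((\<lambda>(x, y). \<phi> y * (\<phi> ((x - \<rho> * y) / s) / s)) has_integral
           integral {..b} (\<lambda>y. \<phi> y * Ncdf ((a - \<rho> * y) / s))) ({..a} \<times> {..b})"
proof -
  define F where "F = (\<lambda>(x, y). \<phi> y * (\<phi> ((x - \<rho> * y) / s) / s))"
  define G where "G y = \<phi> y * Ncdf ((a - \<rho> * y) / s)" for y
  define h where "h z = indicator ({..a} \<times> {..b}) z * F z" for z
  have G_nonneg: "0 \<le> G y" for y by (simp add: G_def Ncdf_nonneg)
  have "G integrable_on {..b}"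
    using bounded_gauss_integrable_on(1)[OF continuous_Ncdf abs_Ncdf_le_1, of "a / s" "\<rho> / s" b]
    unfolding G_def by (simp add: diff_divide_distrib)
  then have G: "(G has_integral integral {..b} G) {..b}" by (simp add: integrable_integral)
  have h_measurable: "h \<in> borel_measurable borel"
    unfolding h_def F_def case_prod_unfold using assms
    by (intro borel_measurable_times borel_measurable_indicator borel_measurable_continuous_onI
        continuous_intros) (auto intro!: borel_closed closed_Times)
  have h_nonneg: "0 \<le> h z" for z
    using assms by (cases z) (simp add: h_def F_def)
  have "(\<lambda>z. ennreal (h z)) \<in> borel_measurable (lborel \<Otimes>\<^sub>M lborel)"
    unfolding lborel_prod using h_measurable by simp
  from lborel_pair.nn_integral_snd[OF this]
  have "(\<integral>\<^sup>+z. ennreal (h z) \<partial>lborel) = (\<integral>\<^sup>+y. (\<integral>\<^sup>+x. ennreal (h (x, y)) \<partial>lborel) \<partial>lborel)"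
    unfolding lborel_prod by simp
  also have "\<dots> = (\<integral>\<^sup>+y. ennreal (indicator {..b} y * G y) \<partial>lborel)"
    unfolding h_def F_def G_def
    by (simp only: case_prod_conv nn_integral_section_conditional_std_normal_density[OF assms])
  also have "\<dots> = ennreal (integral {..b} G)"
    using nn_integral_has_integral_lebesgue[OF _ G] G_nonneg by simp
  finally have "(h has_integral integral {..b} G) UNIV"
    using integral_nonneg[OF \<open>G integrable_on {..b}\<close>] G_nonneg
    by (intro nn_integral_has_integral[OF h_measurable h_nonneg]) auto
  moreover have "h = (\<lambda>z. if z \<in> {..a} \<times> {..b} then F z else 0)"
    by (simp add: h_def indicator_def fun_eq_iff)
  ultimately show ?thesis
    unfolding F_def G_def by (simp add: has_integral_restrict_UNIV)
qed

lemma N2_eq_gauss_integral: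
  assumes "\<bar>\<rho>\<bar> < 1"
  shows "N2 a1 a2 \<rho> = gauss_integral Ncdf a2 (a1 / sqrt (1 - \<rho>\<^sup>2)) (\<rho> / sqrt (1 - \<rho>\<^sup>2))"
proof -
  have s: "sqrt (1 - \<rho>\<^sup>2) > 0" using assms by (simp add: abs_square_less_1)
  have "(\<lambda>(y1, y2). exp (- (y1\<^sup>2 - 2 * \<rho> * y1 * y2 + y2\<^sup>2) / (2 * (1 - \<rho>\<^sup>2))) / (2 * pi * sqrt (1 - \<rho>\<^sup>2)))
      = (\<lambda>(x, y). \<phi> y * (\<phi> ((x - \<rho> * y) / sqrt (1 - \<rho>\<^sup>2)) / sqrt (1 - \<rho>\<^sup>2)))"
    by (simp only: fun_eq_iff split_paired_all case_prod_conv bivariate_normal_density_factor[OF assms]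
        simp_thms)
  with has_integral_conditional_std_normal_density[OF s, where a = a1 and b = a2]
  show ?thesis
    unfolding N2_def gauss_integral_def by (simp add: integral_unique diff_divide_distrib)
qed

section \<open>The heat equation with drift\<close>

definition drift_heat_solution :: "real \<Rightarrow> real \<Rightarrow> (real \<Rightarrow> real \<Rightarrow> real) \<Rightarrow> bool" where
  "drift_heat_solution \<sigma> m Z \<longleftrightarrow> (\<forall>\<tau>>0. \<exists>Zx Zxx Zt. \<forall>x.
     ((\<lambda>x. Z x \<tau>) has_real_derivative Zx x) (at x) \<and> (Zx has_real_derivative Zxx x) (at x) \<and>
     ((\<lambda>\<tau>. Z x \<tau>) has_real_derivative Zt x) (at \<tau>) \<and> Zt x = \<sigma>\<^sup>2 / 2 * Zxx x + m * Zx x)"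

lemma drift_heat_solutionI:
  assumes "\<And>\<tau> x. \<tau> > 0 \<Longrightarrow> ((\<lambda>x. Z x \<tau>) has_real_derivative Zx x \<tau>) (at x)"
    and "\<And>\<tau> x. \<tau> > 0 \<Longrightarrow> ((\<lambda>x. Zx x \<tau>) has_real_derivative Zxx x \<tau>) (at x)"
    and "\<And>\<tau> x. \<tau> > 0 \<Longrightarrow> ((\<lambda>\<tau>. Z x \<tau>) has_real_derivative Zt x \<tau>) (at \<tau>)"
    and "\<And>\<tau> x. \<tau> > 0 \<Longrightarrow> Zt x \<tau> = \<sigma>\<^sup>2 / 2 * Zxx x \<tau> + m * Zx x \<tau>"
  shows "drift_heat_solution \<sigma> m Z"
  unfolding drift_heat_solution_def
proof (intro allI impI)
  fix \<tau> :: real assume "\<tau> > 0"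
  with assms show "\<exists>Zx' Zxx' Zt'. \<forall>x. ((\<lambda>x. Z x \<tau>) has_real_derivative Zx' x) (at x) \<and>
      (Zx' has_real_derivative Zxx' x) (at x) \<and> ((\<lambda>\<tau>. Z x \<tau>) has_real_derivative Zt' x) (at \<tau>) \<and>
      Zt' x = \<sigma>\<^sup>2 / 2 * Zxx' x + m * Zx' x"
    by (intro exI[of _ "\<lambda>x. Zx x \<tau>"] exI[of _ "\<lambda>x. Zxx x \<tau>"] exI[of _ "\<lambda>x. Zt x \<tau>"]) simp
qed

lemma drift_heat_solution_Ncdf:
  assumes "\<sigma> > 0" "\<tau>3 > 0"
  shows "drift_heat_solution \<sigma> m (\<lambda>x \<tau>. Ncdf ((i * (x + m * \<tau>) + a0) / (\<sigma> * sqrt (\<tau>3 + i\<^sup>2 * \<tau>))))"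
proof -
  define w where "w x \<tau> = (i * (x + m * \<tau>) + a0) / (\<sigma> * sqrt (\<tau>3 + i\<^sup>2 * \<tau>))" for x \<tau>
  define w' where "w' \<tau> = i / (\<sigma> * sqrt (\<tau>3 + i\<^sup>2 * \<tau>))" for \<tau>
  have D: "\<tau>3 + i\<^sup>2 * \<tau> > 0" if "\<tau> > 0" for \<tau>
    using assms that by (simp add: add_pos_nonneg)
  have dx: "((\<lambda>x. w x \<tau>) has_real_derivative w' \<tau>) (at x)" if "\<tau> > 0" for x \<tau>
    unfolding w_def w'_def using assms D[OF that] by (auto intro!: derivative_eq_intros)
  have dt: "((\<lambda>\<tau>. w x \<tau>) has_real_derivative m * w' \<tau> - \<sigma>\<^sup>2 / 2 * w x \<tau> * (w' \<tau>)\<^sup>2) (at \<tau>)"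
    if "\<tau> > 0" for x \<tau>
  proof -
    define v where "v = sqrt (\<tau>3 + i\<^sup>2 * \<tau>)"
    have v: "v > 0" "\<tau>3 + i\<^sup>2 * \<tau> = v * v" using D[OF that] by (simp_all add: v_def)
    have "((\<lambda>\<tau>. w x \<tau>) has_real_derivative
        (i * m * (\<sigma> * v) - (i * (x + m * \<tau>) + a0) * (\<sigma> * (inverse v / 2 * i\<^sup>2))) / (\<sigma> * v)\<^sup>2) (at \<tau>)"
      unfolding w_def v_def using assms D[OF that] by (auto intro!: derivative_eq_intros simp: power2_eq_square)
    then show ?thesis
      by (rule DERIV_cong) (use assms v in \<open>simp add: w_def w'_def v_def[symmetric] field_simps power2_eq_square\<close>)
  qed
  have "drift_heat_solution \<sigma> m (\<lambda>x \<tau>. Ncdf (w x \<tau>))"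
  proof (rule drift_heat_solutionI[where Zx = "\<lambda>x \<tau>. \<phi> (w x \<tau>) * w' \<tau>"
        and Zxx = "\<lambda>x \<tau>. - w x \<tau> * \<phi> (w x \<tau>) * w' \<tau> * w' \<tau>"
        and Zt = "\<lambda>x \<tau>. \<phi> (w x \<tau>) * (m * w' \<tau> - \<sigma>\<^sup>2 / 2 * w x \<tau> * (w' \<tau>)\<^sup>2)"])
    fix x \<tau> :: real assume "\<tau> > 0"
    show "((\<lambda>x. Ncdf (w x \<tau>)) has_real_derivative \<phi> (w x \<tau>) * w' \<tau>) (at x)"
      by (rule DERIV_Ncdf_comp[OF dx[OF \<open>\<tau> > 0\<close>]])
    show "((\<lambda>x. \<phi> (w x \<tau>) * w' \<tau>) has_real_derivative - w x \<tau> * \<phi> (w x \<tau>) * w' \<tau> * w' \<tau>) (at x)"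
      by (intro DERIV_cmult_right DERIV_std_normal_density_comp dx \<open>\<tau> > 0\<close>)
    show "((\<lambda>\<tau>. Ncdf (w x \<tau>)) has_real_derivative
        \<phi> (w x \<tau>) * (m * w' \<tau> - \<sigma>\<^sup>2 / 2 * w x \<tau> * (w' \<tau>)\<^sup>2)) (at \<tau>)"
      by (rule DERIV_Ncdf_comp[OF dt[OF \<open>\<tau> > 0\<close>]])
  qed (simp add: power2_eq_square algebra_simps)
  then show ?thesis unfolding w_def .
qed

(* The heat equation Z_t = sigma^2/2 Z_xx + m Z_x for the solution Z of the locale below,
   with u = sqrt tau and v = sqrt tau3. *)
lemma drift_heat_identity:
  fixes u v t \<sigma> i m J0 J2 P Q N b :: real
  assumes "u > 0" "v > 0" "\<sigma> > 0" "t = u * u"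
  shows "i * m / (\<sigma> * v) * J0 + i * u / v / (2 * t) * (P * Q + i * u / v * J2)
      + P * N * (m / (\<sigma> * u) - b / (2 * t))
    = \<sigma>\<^sup>2 / 2 * (i / (\<sigma> * v) * (i / (\<sigma> * v) * J2 + P * Q / (\<sigma> * u)) - b * P * N / (\<sigma> * u)\<^sup>2)
      + m * (i / (\<sigma> * v) * J0 + P * N / (\<sigma> * u))"
  using assms by (simp add: field_simps power2_eq_square)

(* The claimed solution for K > 0 in log coordinates, with c = ln K; by N2_eq_gauss_integral,
   power_arg and corr are a1 / sqrt (1 - rho^2) and rho / sqrt (1 - rho^2). *)
locale strike_solution =
  fixes \<sigma> m i a0 c \<tau>3 :: real
  assumes sigma_pos: "\<sigma> > 0" and tau3_pos: "\<tau>3 > 0"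
begin

definition "strike_arg x \<tau> = (x - c + m * \<tau>) / (\<sigma> * sqrt \<tau>)"

definition "power_arg x \<tau> = (i * (x + m * \<tau>) + a0) / (\<sigma> * sqrt \<tau>3)"

definition "corr \<tau> = i * sqrt \<tau> / sqrt \<tau>3"

definition "power_arg_at_strike = (i * c + a0) / (\<sigma> * sqrt \<tau>3)"

definition "Z x \<tau> = gauss_integral Ncdf (strike_arg x \<tau>) (power_arg x \<tau>) (corr \<tau>)"

definition "Z_x x \<tau> = i / (\<sigma> * sqrt \<tau>3) * gauss_integral \<phi> (strike_arg x \<tau>) (power_arg x \<tau>) (corr \<tau>)
    + \<phi> (strike_arg x \<tau>) * Ncdf power_arg_at_strike / (\<sigma> * sqrt \<tau>)"

definition "Z_xx x \<tau> = i / (\<sigma> * sqrt \<tau>3) * (i / (\<sigma> * sqrt \<tau>3)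
      * gauss_integral (\<lambda>u. - u * \<phi> u) (strike_arg x \<tau>) (power_arg x \<tau>) (corr \<tau>)
      + \<phi> (strike_arg x \<tau>) * \<phi> power_arg_at_strike / (\<sigma> * sqrt \<tau>))
    - strike_arg x \<tau> * \<phi> (strike_arg x \<tau>) * Ncdf power_arg_at_strike / (\<sigma> * sqrt \<tau>)\<^sup>2"

definition "Z_t x \<tau> = i * m / (\<sigma> * sqrt \<tau>3) * gauss_integral \<phi> (strike_arg x \<tau>) (power_arg x \<tau>) (corr \<tau>)
    + corr \<tau> / (2 * \<tau>) * (\<phi> (strike_arg x \<tau>) * \<phi> power_arg_at_strike
        + corr \<tau> * gauss_integral (\<lambda>u. - u * \<phi> u) (strike_arg x \<tau>) (power_arg x \<tau>) (corr \<tau>))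
    + \<phi> (strike_arg x \<tau>) * Ncdf power_arg_at_strike * (m / (\<sigma> * sqrt \<tau>) - strike_arg x \<tau> / (2 * \<tau>))"

lemma power_arg_minus_corr_mult_strike_arg:
  "\<tau> > 0 \<Longrightarrow> power_arg x \<tau> - corr \<tau> * strike_arg x \<tau> = power_arg_at_strike"
  unfolding power_arg_def corr_def strike_arg_def power_arg_at_strike_def
  using sigma_pos tau3_pos by (simp add: field_simps)

lemma Z_deriv_x:
  assumes "\<tau> > 0"
  shows "((\<lambda>x. Z x \<tau>) has_real_derivative Z_x x \<tau>) (at x)"
proof -
  have "((\<lambda>x. power_arg x \<tau>) has_real_derivative i / (\<sigma> * sqrt \<tau>3)) (at p)"
    and "((\<lambda>x. strike_arg x \<tau>) has_real_derivative 1 / (\<sigma> * sqrt \<tau>)) (at p)" for p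
    unfolding power_arg_def strike_arg_def using sigma_pos tau3_pos assms
    by (auto intro!: derivative_eq_intros)
  from has_real_derivative_gauss_integral_Ncdf[where a = "\<lambda>x. power_arg x \<tau>"
      and a' = "\<lambda>_. i / (\<sigma> * sqrt \<tau>3)" and a'' = "\<lambda>_. 0" and k = "\<lambda>_. corr \<tau>"
      and k' = "\<lambda>_. 0" and k'' = "\<lambda>_. 0", OF _ _ _ _ this(2)[of x]] this(1)
  show ?thesis
    unfolding Z_def Z_x_def using power_arg_minus_corr_mult_strike_arg[OF assms] by simp
qed

lemma Z_deriv_xx:
  assumes "\<tau> > 0"
  shows "((\<lambda>x. Z_x x \<tau>) has_real_derivative Z_xx x \<tau>) (at x)"
proof -
  have da: "((\<lambda>x. power_arg x \<tau>) has_real_derivative i / (\<sigma> * sqrt \<tau>3)) (at p)"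
    and db: "((\<lambda>x. strike_arg x \<tau>) has_real_derivative 1 / (\<sigma> * sqrt \<tau>)) (at p)" for p
    unfolding power_arg_def strike_arg_def using sigma_pos tau3_pos assms
    by (auto intro!: derivative_eq_intros)
  from has_real_derivative_gauss_integral_std_normal_density[where a = "\<lambda>x. power_arg x \<tau>"
      and a' = "\<lambda>_. i / (\<sigma> * sqrt \<tau>3)" and a'' = "\<lambda>_. 0" and k = "corr \<tau>", OF _ _ db[of x]] da
  have "((\<lambda>x. gauss_integral \<phi> (strike_arg x \<tau>) (power_arg x \<tau>) (corr \<tau>)) has_real_derivative
      i / (\<sigma> * sqrt \<tau>3) * gauss_integral (\<lambda>u. - u * \<phi> u) (strike_arg x \<tau>) (power_arg x \<tau>) (corr \<tau>)
      + \<phi> (strike_arg x \<tau>) * \<phi> power_arg_at_strike / (\<sigma> * sqrt \<tau>)) (at x)"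
    using power_arg_minus_corr_mult_strike_arg[OF assms] by simp
  from DERIV_add[OF DERIV_cmult[OF this, of "i / (\<sigma> * sqrt \<tau>3)"]
      DERIV_cdivide[OF DERIV_cmult_right[OF DERIV_std_normal_density_comp[OF db[of x]], of "Ncdf power_arg_at_strike"],
        of "\<sigma> * sqrt \<tau>"]]
  show ?thesis unfolding Z_x_def Z_xx_def by (simp add: power2_eq_square algebra_simps)
qed

lemma corr_deriv:
  assumes "\<tau> > 0"
  shows "(corr has_real_derivative corr \<tau> / (2 * \<tau>)) (at \<tau>)"
proof -
  have "(corr has_real_derivative i * (inverse (sqrt \<tau>) / 2) / sqrt \<tau>3) (at \<tau>)"
    unfolding corr_def[abs_def] by (intro DERIV_cdivide DERIV_cmult DERIV_real_sqrt assms)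
  moreover obtain u where "u > 0" "sqrt \<tau> = u" "\<tau> = u * u"
    using assms by (intro that[of "sqrt \<tau>"]) simp_all
  ultimately show ?thesis using tau3_pos unfolding corr_def by (simp add: field_simps)
qed

lemma Z_deriv_tau:
  assumes "\<tau> > 0"
  shows "((\<lambda>\<tau>. Z x \<tau>) has_real_derivative Z_t x \<tau>) (at \<tau>)"
proof -
  have pos: "\<forall>\<^sub>F t in nhds \<tau>. t > 0"
    using eventually_nhds_in_open[of "{0<..}" \<tau>] assms by simp
  have "((\<lambda>t. power_arg x t) has_real_derivative i * m / (\<sigma> * sqrt \<tau>3)) (at t)" for t
    unfolding power_arg_def using sigma_pos tau3_pos by (auto intro!: derivative_eq_intros)
  then have da: "\<forall>\<^sub>F t in nhds \<tau>. ((\<lambda>t. power_arg x t) has_real_derivative i * m / (\<sigma> * sqrt \<tau>3)) (at t)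
      \<and> ((\<lambda>_. i * m / (\<sigma> * sqrt \<tau>3)) has_real_derivative 0) (at t)"
    by simp
  have "(corr has_real_derivative corr t / (2 * t)) (at t)
      \<and> ((\<lambda>t. corr t / (2 * t)) has_real_derivative - corr t / (4 * t\<^sup>2)) (at t)" if "t > 0" for t
    using corr_deriv[OF that] that
    by (auto intro!: derivative_eq_intros simp: field_simps power2_eq_square)
  with pos have dk: "\<forall>\<^sub>F t in nhds \<tau>. (corr has_real_derivative corr t / (2 * t)) (at t)
      \<and> ((\<lambda>t. corr t / (2 * t)) has_real_derivative - corr t / (4 * t\<^sup>2)) (at t)"
    by (auto elim: eventually_mono)
  have cont: "isCont (\<lambda>t. - corr t / (4 * t\<^sup>2)) \<tau>"
    unfolding corr_def using assms tau3_pos by (intro continuous_intros) auto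
  have db: "((\<lambda>t. strike_arg x t) has_real_derivative m / (\<sigma> * sqrt \<tau>) - strike_arg x \<tau> / (2 * \<tau>))
      (at \<tau>)"
  proof -
    have "((\<lambda>t. strike_arg x t) has_real_derivative
        (m * (\<sigma> * sqrt \<tau>) - (x - c + m * \<tau>) * (\<sigma> * (inverse (sqrt \<tau>) / 2))) / (\<sigma> * sqrt \<tau>)\<^sup>2) (at \<tau>)"
      unfolding strike_arg_def[abs_def] using sigma_pos assms
      by (auto intro!: derivative_eq_intros simp: power2_eq_square)
    then show ?thesis
    proof (rule DERIV_cong)
      obtain u where "u > 0" "sqrt \<tau> = u" "\<tau> = u * u"
        using assms by (intro that[of "sqrt \<tau>"]) simp_all
      then show "(m * (\<sigma> * sqrt \<tau>) - (x - c + m * \<tau>) * (\<sigma> * (inverse (sqrt \<tau>) / 2))) / (\<sigma> * sqrt \<tau>)\<^sup>2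
          = m / (\<sigma> * sqrt \<tau>) - strike_arg x \<tau> / (2 * \<tau>)"
        using sigma_pos unfolding strike_arg_def by (simp add: field_simps power2_eq_square)
    qed
  qed
  from has_real_derivative_gauss_integral_Ncdf[OF da dk _ cont db]
  show ?thesis
    using power_arg_minus_corr_mult_strike_arg[OF assms] unfolding Z_def Z_t_def by simp
qed

lemma Z_heat_equation:
  assumes "\<tau> > 0"
  shows "Z_t x \<tau> = \<sigma>\<^sup>2 / 2 * Z_xx x \<tau> + m * Z_x x \<tau>"
  unfolding Z_t_def Z_xx_def Z_x_def corr_def
  by (rule drift_heat_identity) (use assms sigma_pos tau3_pos in simp_all)

lemma drift_heat_solution_Z: "drift_heat_solution \<sigma> m Z"
  by (rule drift_heat_solutionI[OF Z_deriv_x Z_deriv_xx Z_deriv_tau Z_heat_equation])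

lemma strike_arg_tendsto_at_top: "x > c \<Longrightarrow> filterlim (\<lambda>\<tau>. strike_arg x \<tau>) at_top (at_right 0)"
  using sigma_pos unfolding strike_arg_def by real_asymp

lemma strike_arg_tendsto_at_bot: "x < c \<Longrightarrow> filterlim (\<lambda>\<tau>. strike_arg x \<tau>) at_bot (at_right 0)"
proof -
  assume "x < c"
  then have "c - x > 0" by simp
  then have "filterlim (\<lambda>\<tau>. (c - x - m * \<tau>) / (\<sigma> * sqrt \<tau>)) at_top (at_right 0)"
    using sigma_pos by real_asymp
  then show ?thesis
    unfolding strike_arg_def filterlim_uminus_at_bot by (simp add: minus_divide_left)
qed

lemma Z_tendsto:
  assumes "x \<noteq> c"
  shows "((\<lambda>\<tau>. Z x \<tau>) \<longlongrightarrow> Ncdf (power_arg x 0) * (if x > c then 1 else 0)) (at_right 0)"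
proof -
  define M where "M = integral UNIV (\<lambda>y. \<phi> y * \<bar>y\<bar>)"
  have strike: "((\<lambda>\<tau>. Ncdf (strike_arg x \<tau>)) \<longlongrightarrow> (if x > c then 1 else 0)) (at_right 0)"
    using assms filterlim_compose[OF Ncdf_tendsto_at_top strike_arg_tendsto_at_top]
      filterlim_compose[OF Ncdf_tendsto_at_bot strike_arg_tendsto_at_bot]
    by (cases "x > c") auto
  have "((\<lambda>\<tau>. power_arg x \<tau>) \<longlongrightarrow> power_arg x 0) (at_right 0)" "(corr \<longlongrightarrow> 0) (at_right 0)"
    unfolding power_arg_def corr_def[abs_def] using sigma_pos tau3_pos by (auto intro!: tendsto_eq_intros)
  then have "((\<lambda>\<tau>. \<bar>power_arg x \<tau> - power_arg x 0\<bar> + \<bar>corr \<tau>\<bar> * M) \<longlongrightarrow> 0) (at_right 0)"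
    by (auto intro!: tendsto_eq_intros)
  moreover have "\<forall>\<^sub>F \<tau> in at_right 0. norm (Z x \<tau> - Ncdf (power_arg x 0) * Ncdf (strike_arg x \<tau>))
      \<le> \<bar>power_arg x \<tau> - power_arg x 0\<bar> + \<bar>corr \<tau>\<bar> * M"
    unfolding Z_def M_def by (simp add: abs_gauss_integral_Ncdf_minus_le)
  ultimately have "((\<lambda>\<tau>. Z x \<tau> - Ncdf (power_arg x 0) * Ncdf (strike_arg x \<tau>)) \<longlongrightarrow> 0) (at_right 0)"
    by (rule Lim_null_comparison[rotated])
  from tendsto_add[OF this tendsto_mult_left[OF strike, of "Ncdf (power_arg x 0)"]] show ?thesis
    by simp
qed

end

section \<open>Back to the Black--Scholes variables\<close>

lemma has_real_derivative_powr_mult_comp_ln: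
  assumes "Y > 0" and "(g has_real_derivative g') (at (ln Y))"
  shows "((\<lambda>Y. Y powr \<beta> * g (ln Y)) has_real_derivative Y powr (\<beta> - 1) * (\<beta> * g (ln Y) + g')) (at Y)"
proof -
  have "((\<lambda>Y. g (ln Y)) has_real_derivative g' * (1 / Y)) (at Y)"
    by (rule DERIV_chain2[OF assms(2) DERIV_ln_divide[OF assms(1)]])
  from DERIV_mult[OF has_real_derivative_powr[OF assms(1), of \<beta>] this]
  have "((\<lambda>Y. Y powr \<beta> * g (ln Y)) has_real_derivative
      \<beta> * Y powr (\<beta> - 1) * g (ln Y) + g' * (1 / Y) * Y powr \<beta>) (at Y)" .
  moreover have "Y powr \<beta> = Y powr (\<beta> - 1) * Y"
    using assms(1) by (simp add: powr_diff)
  ultimately show ?thesis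
    using assms(1) by (simp add: algebra_simps)
qed

lemma has_real_derivative_time_to_maturity:
  assumes "(f has_real_derivative f') (at (T - t))"
  shows "((\<lambda>s. c * exp (\<mu> * (T - s)) * f (T - s)) has_real_derivative
           - (c * exp (\<mu> * (T - t)) * (\<mu> * f (T - t) + f'))) (at t)"
proof -
  have "((\<lambda>s. T - s) has_real_derivative - 1) (at t)" by (auto intro!: derivative_eq_intros)
  from DERIV_chain2[OF assms this]
  have df: "((\<lambda>s. f (T - s)) has_real_derivative - f') (at t)" by simp
  have de: "((\<lambda>s. exp (\<mu> * (T - s))) has_real_derivative - \<mu> * exp (\<mu> * (T - t))) (at t)"
    by (auto intro!: derivative_eq_intros)
  from DERIV_mult[OF DERIV_cmult[OF de, of c] df] show ?thesis
    by (rule DERIV_cong) (simp add: algebra_simps)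
qed

lemma black_scholes_pde_of_drift_heat_solution:
  fixes V Z :: "real \<Rightarrow> real \<Rightarrow> real"
  assumes heat: "drift_heat_solution \<sigma> (r - q - \<sigma>\<^sup>2 / 2 + \<sigma>\<^sup>2 * \<beta>) Z"
    and V: "\<And>X t. X > 0 \<Longrightarrow> t < T \<Longrightarrow> V X t = X powr \<beta> * exp (mu r q \<sigma> \<beta> * (T - t)) * Z (ln X) (T - t)"
    and t: "t \<in> {0<..<T}" and X: "X > 0"
  shows "\<exists>Vt DX VXX. ((\<lambda>s. V X s) has_real_derivative Vt) (at t) \<and>
           (\<forall>Y>0. ((\<lambda>Y. V Y t) has_real_derivative DX Y) (at Y)) \<and>
           (DX has_real_derivative VXX) (at X) \<and>
           Vt + 1/2 * \<sigma>\<^sup>2 * X\<^sup>2 * VXX + (r - q) * X * DX X - r * V X t = 0"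
proof -
  define \<tau> where "\<tau> = T - t"
  have "\<tau> > 0" using t by (simp add: \<tau>_def)
  with heat obtain Zx Zxx Zt where Zx: "\<And>x. ((\<lambda>x. Z x \<tau>) has_real_derivative Zx x) (at x)"
    and Zxx: "\<And>x. (Zx has_real_derivative Zxx x) (at x)"
    and Zt: "\<And>x. ((\<lambda>\<tau>. Z x \<tau>) has_real_derivative Zt x) (at \<tau>)"
    and pde: "\<And>x. Zt x = \<sigma>\<^sup>2 / 2 * Zxx x + (r - q - \<sigma>\<^sup>2 / 2 + \<sigma>\<^sup>2 * \<beta>) * Zx x"
    unfolding drift_heat_solution_def by blast
  define \<mu> where "\<mu> = mu r q \<sigma> \<beta>"
  define E where "E = exp (\<mu> * \<tau>)"
  define DX where "DX Y = E * (Y powr (\<beta> - 1) * (\<beta> * Z (ln Y) \<tau> + Zx (ln Y)))" for Y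
  define Vt where "Vt = - (X powr \<beta> * E * (\<mu> * Z (ln X) \<tau> + Zt (ln X)))"
  define VXX where "VXX = E * (X powr (\<beta> - 1 - 1) * ((\<beta> - 1) * (\<beta> * Z (ln X) \<tau> + Zx (ln X))
      + (\<beta> * Zx (ln X) + Zxx (ln X))))"
  from has_real_derivative_time_to_maturity[OF Zt[of "ln X", unfolded \<tau>_def], of "X powr \<beta>" \<mu>]
  have "((\<lambda>s. X powr \<beta> * exp (\<mu> * (T - s)) * Z (ln X) (T - s)) has_real_derivative Vt) (at t)"
    by (simp add: Vt_def E_def \<tau>_def)
  then have "((\<lambda>s. V X s) has_real_derivative Vt) (at t)"
    by (rule has_field_derivative_transform_within_open[where S = "{..<T}"])
       (use t V[OF X] in \<open>auto simp: \<mu>_def\<close>)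
  moreover have "((\<lambda>Y. V Y t) has_real_derivative DX Y) (at Y)" if "Y > 0" for Y
  proof -
    from DERIV_cmult[OF has_real_derivative_powr_mult_comp_ln[OF that Zx], of E]
    have "((\<lambda>Y. E * (Y powr \<beta> * Z (ln Y) \<tau>)) has_real_derivative DX Y) (at Y)"
      by (simp add: DX_def)
    then show ?thesis
      by (rule has_field_derivative_transform_within_open[where S = "{0<..}"])
         (use that t V in \<open>auto simp: E_def \<mu>_def \<tau>_def\<close>)
  qed
  moreover have "(DX has_real_derivative VXX) (at X)"
  proof -
    have "((\<lambda>x. \<beta> * Z x \<tau> + Zx x) has_real_derivative \<beta> * Zx (ln X) + Zxx (ln X)) (at (ln X))"
      by (intro DERIV_add DERIV_cmult Zx Zxx)
    from DERIV_cmult[OF has_real_derivative_powr_mult_comp_ln[OF X this, of "\<beta> - 1"], of E]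
    show ?thesis unfolding DX_def[abs_def] VXX_def .
  qed
  moreover have "Vt + 1/2 * \<sigma>\<^sup>2 * X\<^sup>2 * VXX + (r - q) * X * DX X - r * V X t = 0"
  proof -
    have powr: "X powr (\<beta> - 1) = X powr \<beta> / X" "X powr (\<beta> - 1 - 1) = X powr \<beta> / X\<^sup>2"
      using X by (simp_all add: powr_diff power2_eq_square)
    have "V X t = X powr \<beta> * E * Z (ln X) \<tau>"
      using V[OF X] t by (simp add: E_def \<mu>_def \<tau>_def)
    then show ?thesis
      using X unfolding Vt_def VXX_def DX_def pde powr \<mu>_def mu_def
      by (simp add: field_simps power2_eq_square)
  qed
  ultimately show ?thesis by blast
qed

lemma tendsto_at_left_of_log_coordinates:
  fixes V Z :: "real \<Rightarrow> real \<Rightarrow> real"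
  assumes V: "\<And>X t. X > 0 \<Longrightarrow> t < T \<Longrightarrow> V X t = X powr \<beta> * exp (\<mu> * (T - t)) * Z (ln X) (T - t)"
    and X: "X > 0" and lim: "((\<lambda>\<tau>. Z (ln X) \<tau>) \<longlongrightarrow> l) (at_right 0)"
  shows "((\<lambda>t. V X t) \<longlongrightarrow> X powr \<beta> * l) (at_left T)"
proof -
  have "filterlim (\<lambda>t. T - t) (at_right 0) (at_left T)"
    by (rule tendsto_imp_filterlim_at_right) (auto intro!: tendsto_eq_intros eventually_at_leftI[of "T - 1"])
  from filterlim_compose[OF lim this]
  have "((\<lambda>t. X powr \<beta> * exp (\<mu> * (T - t)) * Z (ln X) (T - t)) \<longlongrightarrow> X powr \<beta> * exp (\<mu> * (T - T)) * l)
      (at_left T)"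
    by (intro tendsto_intros)
  moreover have "\<forall>\<^sub>F t in at_left T. X powr \<beta> * exp (\<mu> * (T - t)) * Z (ln X) (T - t) = V X t"
    using V[OF X] by (auto intro: eventually_at_leftI[of "T - 1"])
  ultimately show ?thesis by (simp add: tendsto_cong)
qed

locale power_payoff =
  fixes r q \<sigma> \<beta> i L K \<tau>1 \<tau>2 \<tau>3 :: real
  assumes sigma_pos: "\<sigma> > 0" and L_pos: "L > 0" and K_nonneg: "K \<ge> 0" and tau3_pos: "\<tau>3 > 0"
begin

definition "m = r - q - \<sigma>\<^sup>2 / 2 + \<sigma>\<^sup>2 * \<beta>"

definition "a0 = - ln L + (r - q - \<sigma>\<^sup>2 / 2) * \<tau>1 + \<sigma>\<^sup>2 * \<tau>2"

sublocale strike: strike_solution \<sigma> m i a0 "ln K" \<tau>3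
  using sigma_pos tau3_pos by unfold_locales

definition "log_solution = (if K = 0
    then (\<lambda>x \<tau>. Ncdf ((i * (x + m * \<tau>) + a0) / (\<sigma> * sqrt (\<tau>3 + i\<^sup>2 * \<tau>))))
    else strike.Z)"

lemma drift_heat_solution_log_solution: "drift_heat_solution \<sigma> m log_solution"
  using drift_heat_solution_Ncdf[OF sigma_pos tau3_pos] strike.drift_heat_solution_Z
  by (simp add: log_solution_def)

lemma delta_power_eq:
  assumes "X > 0"
  shows "delta r q \<sigma> (X powr i / L) (\<tau>1 + i * \<tau>) (\<tau>2 + i * \<beta> * \<tau>) D
           = (i * (ln X + m * \<tau>) + a0) / (\<sigma> * sqrt D)"
  using assms L_pos by (simp add: delta_def m_def a0_def ln_div ln_powr algebra_simps)

lemma Vsol_eq: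
  assumes X: "X > 0" and \<tau>: "\<tau> > 0"
  shows "Vsol r q \<sigma> \<beta> i L K \<tau>1 \<tau>2 \<tau>3 X \<tau> = X powr \<beta> * exp (mu r q \<sigma> \<beta> * \<tau>) * log_solution (ln X) \<tau>"
proof (cases "K = 0")
  case True
  then show ?thesis unfolding log_solution_def by (simp add: Vsol_def delta_power_eq[OF X])
next
  case False
  then have K: "K > 0" using K_nonneg by simp
  define D where "D = \<tau>3 + i\<^sup>2 * \<tau>"
  have D: "D > 0" using tau3_pos \<tau> by (simp add: D_def add_pos_nonneg)
  define \<rho> where "\<rho> = i * sqrt (\<tau> / D)"
  have \<rho>2: "1 - \<rho>\<^sup>2 = \<tau>3 / D"
    using D \<tau> by (simp add: \<rho>_def D_def power_mult_distrib field_simps)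
  then have "\<rho>\<^sup>2 < 1" using divide_pos_pos[OF tau3_pos D] by linarith
  then have "\<bar>\<rho>\<bar> < 1" by (simp add: abs_square_less_1)
  moreover have s: "sqrt (1 - \<rho>\<^sup>2) = sqrt \<tau>3 / sqrt D" by (simp add: \<rho>2 real_sqrt_divide)
  have "(i * (ln X + m * \<tau>) + a0) / (\<sigma> * sqrt D) / (sqrt \<tau>3 / sqrt D) = strike.power_arg (ln X) \<tau>"
    using D by (simp add: strike.power_arg_def)
  moreover have "\<rho> / (sqrt \<tau>3 / sqrt D) = strike.corr \<tau>"
    using D by (simp add: \<rho>_def strike.corr_def real_sqrt_divide)
  moreover have "delta r q \<sigma> (X / K) \<tau> (\<beta> * \<tau>) \<tau> = strike.strike_arg (ln X) \<tau>"
    unfolding strike.strike_arg_def unfolding delta_def m_def using X K by (simp add: ln_div algebra_simps)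
  ultimately have "N2 (delta r q \<sigma> (X powr i / L) (\<tau>1 + i * \<tau>) (\<tau>2 + i * \<beta> * \<tau>) D)
      (delta r q \<sigma> (X / K) \<tau> (\<beta> * \<tau>) \<tau>) \<rho> = strike.Z (ln X) \<tau>"
    unfolding N2_eq_gauss_integral[OF \<open>\<bar>\<rho>\<bar> < 1\<close>] s delta_power_eq[OF X] strike.Z_def by simp
  then show ?thesis
    using False unfolding log_solution_def by (simp add: Vsol_def D_def \<rho>_def)
qed

lemma log_solution_tendsto:
  assumes X: "X > 0" and "X \<noteq> K"
  shows "((\<lambda>\<tau>. log_solution (ln X) \<tau>) \<longlongrightarrow>
           Ncdf (delta r q \<sigma> (X powr i / L) \<tau>1 \<tau>2 \<tau>3) * (if X > K then 1 else 0)) (at_right 0)"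
proof -
  have delta: "delta r q \<sigma> (X powr i / L) \<tau>1 \<tau>2 \<tau>3 = (i * (ln X + m * 0) + a0) / (\<sigma> * sqrt \<tau>3)"
    using delta_power_eq[OF X, of 0 \<tau>3] by simp
  show ?thesis
  proof (cases "K = 0")
    case True
    have "((\<lambda>\<tau>. Ncdf ((i * (ln X + m * \<tau>) + a0) / (\<sigma> * sqrt (\<tau>3 + i\<^sup>2 * \<tau>)))) \<longlongrightarrow>
        Ncdf ((i * (ln X + m * 0) + a0) / (\<sigma> * sqrt (\<tau>3 + i\<^sup>2 * 0)))) (at_right 0)"
      using sigma_pos tau3_pos by (intro tendsto_intros) auto
    then show ?thesis unfolding log_solution_def using True X delta by simp
  next
    case False
    with assms K_nonneg have "ln X \<noteq> ln K" "ln K < ln X \<longleftrightarrow> K < X" by auto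
    with strike.Z_tendsto[of "ln X"] show ?thesis
      unfolding log_solution_def using False delta by (simp add: strike.power_arg_def)
  qed
qed

end

theorem theorem1:
  fixes \<sigma> r q T \<beta> i L K \<tau>1 \<tau>2 \<tau>3 :: real
  assumes "\<sigma> > 0" and "T > 0" and "L > 0" and "K \<ge> 0" and "\<tau>3 > 0"
  defines "V \<equiv> (\<lambda>X t. Vsol r q \<sigma> \<beta> i L K \<tau>1 \<tau>2 \<tau>3 X (T - t))"
  shows "(\<forall>t\<in>{0<..<T}. \<forall>X>0. \<exists>Vt DX VXX.
            ((\<lambda>s. V X s) has_real_derivative Vt) (at t) \<and>
            (\<forall>Y>0. ((\<lambda>Z. V Z t) has_real_derivative DX Y) (at Y)) \<and>
            (DX has_real_derivative VXX) (at X) \<and>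
            Vt + 1/2 * \<sigma>\<^sup>2 * X\<^sup>2 * VXX + (r - q) * X * DX X - r * V X t = 0)
       \<and> (\<forall>X>0. X \<noteq> K \<longrightarrow>
            ((\<lambda>t. V X t) \<longlongrightarrow> payoff r q \<sigma> \<beta> i L K \<tau>1 \<tau>2 \<tau>3 X) (at_left T))"
proof -
  interpret power_payoff r q \<sigma> \<beta> i L K \<tau>1 \<tau>2 \<tau>3
    using assms by unfold_locales
  have V_eq: "V X t = X powr \<beta> * exp (mu r q \<sigma> \<beta> * (T - t)) * log_solution (ln X) (T - t)"
    if "X > 0" "t < T" for X t
    using that by (simp add: V_def Vsol_eq)
  have "drift_heat_solution \<sigma> (r - q - \<sigma>\<^sup>2 / 2 + \<sigma>\<^sup>2 * \<beta>) log_solution"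
    using drift_heat_solution_log_solution by (simp add: m_def)
  note pde = black_scholes_pde_of_drift_heat_solution[OF this V_eq]
  have terminal: "((\<lambda>t. V X t) \<longlongrightarrow> payoff r q \<sigma> \<beta> i L K \<tau>1 \<tau>2 \<tau>3 X) (at_left T)"
    if "X > 0" "X \<noteq> K" for X
    using tendsto_at_left_of_log_coordinates[OF V_eq that(1) log_solution_tendsto[OF that]]
    by (simp add: payoff_def mult.assoc)
  show ?thesis using pde terminal by blast
qed

end
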